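(* Let a binary game be given as described in the context, and suppose Assumptions (A1), (A2) and (A3) hold. Then problem (P) can be reformulated exactly as a mixed-integer program whose objective is linear or convex quadratic and whose constraints are all linear; for this reformulation the conclusions of the following two statements remain valid: (a) under (A1), $(x_i,y_i)_{i\in I}$ is a Nash equilibrium iff it extends, with all $\zeta_i^{(1)}=\zeta_i^{(0)}=0$, to a feasible point; (b) under (A1),(A2), every optimal solution yields a binary quasi-equilibrium $(x_i,y_i)_{i\in I}$ with compensation $\zeta_i=\zeta_i^{(1)}+\zeta_i^{(0)}$, and every binary quasi-equilibrium extends to a feasible point.
   Context: Binary game: players $i\in I=\{1,\dots,n\}$. Player $i$ chooses $x_i\in\{0,1\}$ and $y_i\in\mathbb{R}^m$ and solves $\min f_i(x_i,y_i,y_{-i})$ subject to $g_i(x_i,y_i)\le 0$, with $g_i:\{0,1\}\times\mathbb{R}^m\to\mathbb{R}^k$, $y_{-i}=(y_j)_{j\ne i}$; $K_i=\{(x_i,y_i):g_i(x_i,y_i)\le0\}$. Nash equilibrium: $((x_i^*,y_i^* )\in K_i)_{i}$ such that for every $i$, $y_i^*$ minimizes $f_i(x_i^*,\cdot,y_{-i}^* )$ over $\{y_i:g_i(x_i^*,y_i)\le0\}$ and $f_i(x_i^*,y_i^*,y_{-i}^* )\le f_i(x_i^\times,y_i^\times,y_{-i}^* )$, where $x_i^\times=1-x_i^*$ and $y_i^\times$ minimizes $f_i(x_i^\times,\cdot,y_{-i}^* )$ over $\{y_i:g_i(x_i^\times,y_i)\le0\}$. Binary quasi-equilibrium: same first condition,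 plus compensations $\zeta_i\ge0$ with $f_i(x_i^*,y_i^*,y_{-i}^* )-\zeta_i\le f_i(x_i^\times,y_i^\times,y_{-i}^* )$, $\zeta_i$ minimal with this property. (A1): for each $i$ and fixed $x_i$ (and $y_{-i}$), the KKT conditions w.r.t. $y_i$ are necessary and sufficient, and $\{y_i:g_i(x_i,y_i)\le0\}$ is compact and non-empty. (A2): $F,G$ (below) are convex quadratic or linear for each fixed binary vector, and $\partial G/\partial\zeta_i>0$. (A3): $f_i(x_i,y_i,y_{-i})=f_i^{(x)}(x_i,y_{-i})+f_i^{(y)}(y_i\mid y_{-i})$, where $f_i^{(x)}$ is linear in $x_i$ and $y_{-i}$, $f_i^{(y)}$ is linear in $y_i$ for fixed $y_{-i}$, and $\nabla_{y_i}f_i^{(y)}$ is linear in all variables; and the constraints are affine: $g_i(x_i,y_i)\le0$ reads $a_ix_i+A_iy_i\le b_i$ for vectors $a_i,b_i$ and a matrix $A_i$. Problem (P): with a sufficiently large constant $\widetilde K>0$, minimize $F((x_i,y_i)_{i})+G((\zeta_i^{(1)},\zeta_i^{(0)})_{i})$ over $x_i\in\{0,1\}$, $y_i,\widetilde y_i^{(1)},\widetilde y_i^{(0)}\in\mathbb{R}^m$, $\widetilde\lambda_i^{(b)}\in\mathbb{R}^k_+$, $\kappa_i^{(b)},\zeta_i^{(b)}\ge0$, subject to, for all $i$, $b\in\{0,1\}$: $\nabla_{y_i} f_i(b,\widetilde y_i^{(b)},y_{-i})+(\widetilde\lambda_i^{(b)})^T\nabla_{y_i} g_i(b,\widetilde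 y_i^{(b)})=0$; $0\le -g_i(b,\widetilde y_i^{(b)})\perp\widetilde\lambda_i^{(b)}\ge0$; $f_i(1,\widetilde y_i^{(1)},y_{-i})+\kappa_i^{(1)}-\zeta_i^{(1)}-\kappa_i^{(0)}+\zeta_i^{(0)}=f_i(0,\widetilde y_i^{(0)},y_{-i})$; $\kappa_i^{(1)}+\zeta_i^{(1)}\le x_i\widetilde K$; $\kappa_i^{(0)}+\zeta_i^{(0)}\le(1-x_i)\widetilde K$; $\widetilde y_i^{(0)}-x_i\widetilde K\le y_i\le\widetilde y_i^{(0)}+x_i\widetilde K$; $\widetilde y_i^{(1)}-(1-x_i)\widetilde K\le y_i\le\widetilde y_i^{(1)}+(1-x_i)\widetilde K$. *)

theory Defs
  imports "HOL-Analysis.Analysis"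
begin

text \<open>A strategy
 profile is x :: real^'p, y :: (real^'m)^'p.  The cost f i xi yi Y takes the whole profile Y;
 its independence of the i-th component Y$i (i.e. dependence on y_{-i} only) is a
 hypothesis of the theorem.\<close>

definition grad :: "('a::real_inner \<Rightarrow> real) \<Rightarrow> 'a \<Rightarrow> 'a" where
  "grad \<phi> v = (SOME D. GDERIV \<phi> v :> D)"

definition Kset :: "('p \<Rightarrow> real \<Rightarrow> real^'m \<Rightarrow> real^'k) \<Rightarrow> 'p \<Rightarrow> real \<Rightarrow> (real^'m) set" where
  "Kset g i xi = {yi. \<forall>l. g i xi yi $ l \<le> 0}"

definition is_argmin ::
  "('p \<Rightarrow> real \<Rightarrow> real^'m \<Rightarrow> (real^'m)^'p \<Rightarrow> real) \<Rightarrow> ('p \<Rightarrow> real \<Rightarrow> real^'m \<Rightarrow> real^'k)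
   \<Rightarrow> 'p \<Rightarrow> real \<Rightarrow> (real^'m)^'p \<Rightarrow> real^'m \<Rightarrow> bool" where
  "is_argmin f g i xi Y yi \<longleftrightarrow>
     yi \<in> Kset g i xi \<and> (\<forall>y' \<in> Kset g i xi. f i xi yi Y \<le> f i xi y' Y)"

definition KKT ::
  "('p \<Rightarrow> real \<Rightarrow> real^'m \<Rightarrow> (real^'m)^'p \<Rightarrow> real) \<Rightarrow> ('p \<Rightarrow> real \<Rightarrow> real^'m \<Rightarrow> real^'k)
   \<Rightarrow> 'p \<Rightarrow> real \<Rightarrow> (real^'m)^'p \<Rightarrow> real^'m \<Rightarrow> real^'k \<Rightarrow> bool" where
  "KKT f g i xi Y yi lam \<longleftrightarrow>
     (\<forall>l. 0 \<le> lam $ l) \<and>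
     grad (\<lambda>v. f i xi v Y) yi + (\<Sum>l\<in>UNIV. lam $ l *\<^sub>R grad (\<lambda>v. g i xi v $ l) yi) = 0 \<and>
     (\<forall>l. g i xi yi $ l \<le> 0) \<and>
     (\<forall>l. lam $ l * g i xi yi $ l = 0)"

definition A1 ::
  "('p \<Rightarrow> real \<Rightarrow> real^'m \<Rightarrow> (real^'m)^'p \<Rightarrow> real) \<Rightarrow> ('p \<Rightarrow> real \<Rightarrow> real^'m \<Rightarrow> real^'k) \<Rightarrow> bool" where
  "A1 f g \<longleftrightarrow> (\<forall>i xi Y. xi \<in> {0,1} \<longrightarrow>
      compact (Kset g i xi) \<and> Kset g i xi \<noteq> {} \<and>
      (\<forall>yi. is_argmin f g i xi Y yi \<longleftrightarrow> (\<exists>lam. KKT f g i xi Y yi lam)))"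

definition cq_or_lin :: "('a::euclidean_space \<Rightarrow> real) \<Rightarrow> bool" where
  "cq_or_lin \<phi> \<longleftrightarrow> (\<exists>Q c d. linear Q \<and> (\<forall>v. 0 \<le> v \<bullet> Q v) \<and> (\<forall>v. \<phi> v = v \<bullet> Q v + c \<bullet> v + d))"

definition A2 :: "(real^'p \<Rightarrow> (real^'m)^'p \<Rightarrow> real) \<Rightarrow> ((real^'p) \<times> (real^'p) \<Rightarrow> real) \<Rightarrow> bool" where
  "A2 F G \<longleftrightarrow>
     (\<forall>x. (\<forall>i. x $ i \<in> {0,1}) \<longrightarrow> cq_or_lin (F x)) \<and>
     cq_or_lin G \<and>
     (\<forall>z1 z0. (\<forall>i. 0 \<le> z1 $ i \<and> 0 \<le> z0 $ i) \<longrightarrow> (\<forall>i.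
        (\<exists>D>0. ((\<lambda>t. G (z1 + t *\<^sub>R axis i 1, z0)) has_real_derivative D) (at 0)) \<and>
        (\<exists>D>0. ((\<lambda>t. G (z1, z0 + t *\<^sub>R axis i 1)) has_real_derivative D) (at 0))))"

definition A3 ::
  "('p \<Rightarrow> real \<Rightarrow> real^'m \<Rightarrow> (real^'m)^'p \<Rightarrow> real) \<Rightarrow> ('p \<Rightarrow> real \<Rightarrow> real^'m \<Rightarrow> real^'k) \<Rightarrow> bool" where
  "A3 f g \<longleftrightarrow>
     (\<forall>i. \<exists>fx fy.
        (\<forall>xi yi Y. f i xi yi Y = fx xi Y + fy yi Y) \<and>
        (\<exists>\<alpha> \<beta> \<gamma>. \<forall>xi Y. fx xi Y = \<alpha> * xi + (\<Sum>j\<in>UNIV - {i}. \<beta> j \<bullet> Y $ j) + \<gamma>) \<and>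
        (\<exists>c0 M h. \<forall>yi Y. fy yi Y = (c0 + (\<Sum>j\<in>UNIV - {i}. M j *v Y $ j)) \<bullet> yi + h Y)) \<and>
     (\<forall>i. \<exists>(a::real^'k) (A::real^'m^'k) b. \<forall>xi yi. g i xi yi = xi *\<^sub>R a + A *v yi - b)"

definition NE ::
  "('p \<Rightarrow> real \<Rightarrow> real^'m \<Rightarrow> (real^'m)^'p \<Rightarrow> real) \<Rightarrow> ('p \<Rightarrow> real \<Rightarrow> real^'m \<Rightarrow> real^'k)
   \<Rightarrow> real^'p \<Rightarrow> (real^'m)^'p \<Rightarrow> bool" where
  "NE f g x y \<longleftrightarrow> (\<forall>i. x $ i \<in> {0,1} \<and> is_argmin f g i (x $ i) y (y $ i) \<and>
      (\<exists>yx. is_argmin f g i (1 - x $ i) y yx \<and> f i (x $ i) (y $ i) y \<le> f i (1 - x $ i) yx y))"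

definition BQE ::
  "('p \<Rightarrow> real \<Rightarrow> real^'m \<Rightarrow> (real^'m)^'p \<Rightarrow> real) \<Rightarrow> ('p \<Rightarrow> real \<Rightarrow> real^'m \<Rightarrow> real^'k)
   \<Rightarrow> real^'p \<Rightarrow> (real^'m)^'p \<Rightarrow> real^'p \<Rightarrow> bool" where
  "BQE f g x y \<zeta> \<longleftrightarrow> (\<forall>i. x $ i \<in> {0,1} \<and> is_argmin f g i (x $ i) y (y $ i) \<and> 0 \<le> \<zeta> $ i \<and>
      (\<exists>yx. is_argmin f g i (1 - x $ i) y yx \<and>
         f i (x $ i) (y $ i) y - \<zeta> $ i \<le> f i (1 - x $ i) yx y \<and>
         (\<forall>\<zeta>'\<ge>0. f i (x $ i) (y $ i) y - \<zeta>' \<le> f i (1 - x $ i) yx y \<longrightarrow> \<zeta> $ i \<le> \<zeta>')))"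

definition P_feas ::
  "('p \<Rightarrow> real \<Rightarrow> real^'m \<Rightarrow> (real^'m)^'p \<Rightarrow> real) \<Rightarrow> ('p \<Rightarrow> real \<Rightarrow> real^'m \<Rightarrow> real^'k) \<Rightarrow> real
   \<Rightarrow> real^'p \<Rightarrow> (real^'m)^'p \<Rightarrow> (real^'m)^'p \<Rightarrow> (real^'m)^'p \<Rightarrow> (real^'k)^'p \<Rightarrow> (real^'k)^'p
   \<Rightarrow> real^'p \<Rightarrow> real^'p \<Rightarrow> real^'p \<Rightarrow> real^'p \<Rightarrow> bool" where
  "P_feas f g K x y yt1 yt0 l1 l0 k1 k0 z1 z0 \<longleftrightarrow> (\<forall>i.
     x $ i \<in> {0,1} \<and>
     KKT f g i 1 y (yt1 $ i) (l1 $ i) \<and> KKT f g i 0 y (yt0 $ i) (l0 $ i) \<and>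
     0 \<le> k1 $ i \<and> 0 \<le> k0 $ i \<and> 0 \<le> z1 $ i \<and> 0 \<le> z0 $ i \<and>
     f i 1 (yt1 $ i) y + k1 $ i - z1 $ i - k0 $ i + z0 $ i = f i 0 (yt0 $ i) y \<and>
     k1 $ i + z1 $ i \<le> x $ i * K \<and> k0 $ i + z0 $ i \<le> (1 - x $ i) * K \<and>
     (\<forall>l. yt0 $ i $ l - x $ i * K \<le> y $ i $ l \<and> y $ i $ l \<le> yt0 $ i $ l + x $ i * K) \<and>
     (\<forall>l. yt1 $ i $ l - (1 - x $ i) * K \<le> y $ i $ l \<and> y $ i $ l \<le> yt1 $ i $ l + (1 - x $ i) * K))"

text \<open>Mixed-integer program in variables z :: nat => real (coordinates 0..N-1), binary
 coordinates Bin, linear constraints sum_j A r j * z j <= b r for r < R (equalities are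
 pairs of inequalities), objective z^T Q z + c^T z + d with Q positive semidefinite
 (Q = 0 gives the linear case).\<close>
definition mip_feasible ::
  "nat \<Rightarrow> nat set \<Rightarrow> nat \<Rightarrow> (nat \<Rightarrow> nat \<Rightarrow> real) \<Rightarrow> (nat \<Rightarrow> real) \<Rightarrow> (nat \<Rightarrow> real) \<Rightarrow> bool" where
  "mip_feasible N Bin R A b z \<longleftrightarrow> (\<forall>j\<ge>N. z j = 0) \<and> (\<forall>j\<in>Bin. z j \<in> {0,1}) \<and>
     (\<forall>r<R. (\<Sum>j<N. A r j * z j) \<le> b r)"

definition mip_obj :: "nat \<Rightarrow> (nat \<Rightarrow> nat \<Rightarrow> real) \<Rightarrow> (nat \<Rightarrow> real) \<Rightarrow> real \<Rightarrow> (nat \<Rightarrow> real) \<Rightarrow> real" where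
  "mip_obj N Q c d z = (\<Sum>j<N. \<Sum>k<N. Q j k * z j * z k) + (\<Sum>j<N. c j * z j) + d"

definition psd :: "nat \<Rightarrow> (nat \<Rightarrow> nat \<Rightarrow> real) \<Rightarrow> bool" where
  "psd N Q \<longleftrightarrow> (\<forall>v. 0 \<le> (\<Sum>j<N. \<Sum>k<N. Q j k * v j * v k))"

definition xof :: "('p + ('p \<times> 'm) + 'p + 'p \<Rightarrow> nat) \<Rightarrow> (nat \<Rightarrow> real) \<Rightarrow> real^'p" where
  "xof idx z = (\<chi> i. z (idx (Inl i)))"
definition yof :: "('p + ('p \<times> 'm) + 'p + 'p \<Rightarrow> nat) \<Rightarrow> (nat \<Rightarrow> real) \<Rightarrow> (real^'m::finite)^'p" where
  "yof idx z = (\<chi> i. \<chi> l. z (idx (Inr (Inl (i, l)))))"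
definition z1of :: "('p + ('p \<times> 'm) + 'p + 'p \<Rightarrow> nat) \<Rightarrow> (nat \<Rightarrow> real) \<Rightarrow> real^'p" where
  "z1of idx z = (\<chi> i. z (idx (Inr (Inr (Inl i)))))"
definition z0of :: "('p + ('p \<times> 'm) + 'p + 'p \<Rightarrow> nat) \<Rightarrow> (nat \<Rightarrow> real) \<Rightarrow> real^'p" where
  "z0of idx z = (\<chi> i. z (idx (Inr (Inr (Inr i)))))"

end

theory Submission
  imports Defs
begin

text \<open>Under (A3) player \<open>i\<close>'s problem in \<open>y\<^sub>i\<close> is a linear program whose cost vector
  \<open>c\<^sub>i(y\<^sub>-\<^sub>i)\<close> is affine in the other players' strategies, and the cost jump between \<open>x\<^sub>i = 1\<close>
  and \<open>x\<^sub>i = 0\<close> is a constant plus \<open>c\<^sub>i(y\<^sub>-\<^sub>i) \<bullet> (\<tilde>y\<^sup>1 - \<tilde>y\<^sup>0)\<close>. Along KKT points LP duality replaces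
  each bilinear term \<open>c\<^sub>i \<bullet> \<tilde>y\<close> by \<open>-\<lambda>\<^sup>T(b\<^sub>i - x a\<^sub>i)\<close>, linear in the multipliers. The only
  remaining nonlinearity of (P), complementarity, becomes linear once the active set of rows is
  guessed: a binary selector per candidate active set, with big-M bounds that are valid because the
  feasible sets are compact. Likewise \<open>F(x, y)\<close>, convex quadratic only for fixed binary \<open>x\<close>, is
  linearized by a selector per binary profile with a disaggregated copy of \<open>y\<close>. Conversely every
  solution of (P) yields a program point with the same \<open>x\<close>, \<open>y\<close>, \<open>\<zeta>\<close>, and since \<open>G\<close>
  strictly increases in each \<open>\<zeta>\<close>, an optimal point has \<open>\<zeta>\<^sub>i \<kappa>\<^sub>i = 0\<close>, which makes \<open>\<zeta>\<close> the minimal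
  compensation.\<close>

section \<open>Linear systems and convex quadratics in finitely many variables\<close>

definition affine_fun :: "(('v::finite \<Rightarrow> real) \<Rightarrow> real) \<Rightarrow> bool" where
  "affine_fun \<phi> \<longleftrightarrow> (\<exists>a c. \<forall>u. \<phi> u = (\<Sum>v\<in>UNIV. a v * u v) + c)"

lemma affine_fun_const: "affine_fun (\<lambda>u. c)"
  unfolding affine_fun_def by (rule exI[of _ "\<lambda>_. 0"]) simp

lemma affine_fun_coord: "affine_fun (\<lambda>u. u v)"
proof -
  have eq: "(\<Sum>w\<in>UNIV. (if w = v then 1 else 0) * u w) + 0 = u v" for u :: "_ \<Rightarrow> real"
    by (simp add: if_distrib[of "\<lambda>t. t * _"] cong: if_cong)
  show ?thesis unfolding affine_fun_def by (intro exI allI) (rule eq[symmetric])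
qed

lemma affine_fun_add:
  assumes "affine_fun f" "affine_fun g"
  shows "affine_fun (\<lambda>u. f u + g u)"
proof -
  obtain a c a' c' where "\<And>u. f u = (\<Sum>v\<in>UNIV. a v * u v) + c" "\<And>u. g u = (\<Sum>v\<in>UNIV. a' v * u v) + c'"
    using assms unfolding affine_fun_def by metis
  then have eq: "f u + g u = (\<Sum>v\<in>UNIV. (a v + a' v) * u v) + (c + c')" for u
    by (simp add: distrib_right sum.distrib)
  show ?thesis unfolding affine_fun_def by (intro exI allI) (rule eq)
qed

lemma affine_fun_mult_left:
  assumes "affine_fun f"
  shows "affine_fun (\<lambda>u. k * f u)"
proof -
  obtain a c where "\<And>u. f u = (\<Sum>v\<in>UNIV. a v * u v) + c"
    using assms unfolding affine_fun_def by metis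
  then have eq: "k * f u = (\<Sum>v\<in>UNIV. (k * a v) * u v) + k * c" for u
    by (simp add: distrib_left sum_distrib_left mult.assoc)
  show ?thesis unfolding affine_fun_def by (intro exI allI) (rule eq)
qed

lemma affine_fun_mult_right: "affine_fun f \<Longrightarrow> affine_fun (\<lambda>u. f u * k)"
  using affine_fun_mult_left[of f k] by (simp add: mult.commute)

lemma affine_fun_uminus: "affine_fun f \<Longrightarrow> affine_fun (\<lambda>u. - f u)"
  using affine_fun_mult_left[of f "-1"] by simp

lemma affine_fun_diff: "affine_fun f \<Longrightarrow> affine_fun g \<Longrightarrow> affine_fun (\<lambda>u. f u - g u)"
  using affine_fun_add[OF _ affine_fun_uminus, of f g] by simp

lemma affine_fun_sum:
  "finite A \<Longrightarrow> (\<And>i. i \<in> A \<Longrightarrow> affine_fun (f i)) \<Longrightarrow> affine_fun (\<lambda>u. \<Sum>i\<in>A. f i u)"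
  by (induction A rule: finite_induct) (auto intro: affine_fun_const affine_fun_add)

lemmas affine_fun_intros = affine_fun_coord affine_fun_const affine_fun_add affine_fun_diff
  affine_fun_uminus affine_fun_mult_left affine_fun_mult_right affine_fun_sum

definition lin_ineq_definable :: "(('v::finite \<Rightarrow> real) \<Rightarrow> bool) \<Rightarrow> bool" where
  "lin_ineq_definable P \<longleftrightarrow>
     (\<exists>L. \<forall>u. P u \<longleftrightarrow> (\<forall>(a, c)\<in>set L. (\<Sum>v\<in>UNIV. a v * u v) \<le> c))"

lemma lin_ineq_definable_True: "lin_ineq_definable (\<lambda>u. True)"
  unfolding lin_ineq_definable_def by (rule exI[of _ "[]"]) simp

lemma lin_ineq_definable_le:
  assumes "affine_fun f" "affine_fun g"
  shows "lin_ineq_definable (\<lambda>u. f u \<le> g u)"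
proof -
  obtain a c where "\<And>u. f u - g u = (\<Sum>v\<in>UNIV. a v * u v) + c"
    using affine_fun_diff[OF assms] unfolding affine_fun_def by blast
  then show ?thesis
    unfolding lin_ineq_definable_def by (intro exI[of _ "[(a, - c)]"]) (auto simp: algebra_simps)
qed

lemma lin_ineq_definable_conj:
  "lin_ineq_definable P \<Longrightarrow> lin_ineq_definable Q \<Longrightarrow> lin_ineq_definable (\<lambda>u. P u \<and> Q u)"
  unfolding lin_ineq_definable_def by (elim exE, rename_tac L L', rule_tac x = "L @ L'" in exI) auto

lemma lin_ineq_definable_eq:
  "affine_fun f \<Longrightarrow> affine_fun g \<Longrightarrow> lin_ineq_definable (\<lambda>u. f u = g u)"
  using lin_ineq_definable_conj[OF lin_ineq_definable_le[of f g] lin_ineq_definable_le[of g f]]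
  by (simp add: order_eq_iff)

lemma lin_ineq_definable_abs_le:
  "affine_fun f \<Longrightarrow> affine_fun g \<Longrightarrow> lin_ineq_definable (\<lambda>u. \<bar>f u\<bar> \<le> g u)"
  using lin_ineq_definable_conj[OF lin_ineq_definable_le[of f g] lin_ineq_definable_le[of "\<lambda>u. - f u" g]]
  by (simp add: abs_le_iff affine_fun_uminus)

lemma lin_ineq_definable_imp: "(c \<Longrightarrow> lin_ineq_definable P) \<Longrightarrow> lin_ineq_definable (\<lambda>u. c \<longrightarrow> P u)"
  by (cases c) (simp_all add: lin_ineq_definable_True)

lemma lin_ineq_definable_all:
  fixes P :: "'i::finite \<Rightarrow> ('v::finite \<Rightarrow> real) \<Rightarrow> bool"
  assumes "\<And>i. lin_ineq_definable (P i)"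
  shows "lin_ineq_definable (\<lambda>u. \<forall>i. P i u)"
proof -
  have list: "lin_ineq_definable (\<lambda>u. \<forall>i\<in>set xs. P i u)" for xs
  proof (induction xs)
    case Nil
    show ?case by (simp add: lin_ineq_definable_True)
  next
    case (Cons i xs)
    have "lin_ineq_definable (\<lambda>u. P i u \<and> (\<forall>j\<in>set xs. P j u))"
      by (rule lin_ineq_definable_conj[OF assms Cons.IH])
    then show ?case by simp
  qed
  obtain xs :: "'i list" where xs: "set xs = UNIV" using finite_list[OF finite] by blast
  show ?thesis using list[of xs] unfolding xs by simp
qed

definition convex_quadratic :: "(('v::finite \<Rightarrow> real) \<Rightarrow> real) \<Rightarrow> bool" where
  "convex_quadratic \<phi> \<longleftrightarrow> (\<exists>Q a c.
     (\<forall>u. \<phi> u = (\<Sum>v\<in>UNIV. \<Sum>w\<in>UNIV. Q v w * u v * u w) + (\<Sum>v\<in>UNIV. a v * u v) + c) \<and>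
     (\<forall>u. 0 \<le> (\<Sum>v\<in>UNIV. \<Sum>w\<in>UNIV. Q v w * u v * u w)))"

lemma convex_quadratic_affine:
  assumes "affine_fun f"
  shows "convex_quadratic f"
proof -
  obtain a c where "\<And>u. f u = (\<Sum>v\<in>UNIV. a v * u v) + c"
    using assms unfolding affine_fun_def by metis
  then show ?thesis
    unfolding convex_quadratic_def by (intro exI[of _ "\<lambda>_ _. 0"] exI[of _ a] exI[of _ c]) simp
qed

lemma convex_quadratic_add:
  assumes "convex_quadratic f" "convex_quadratic g"
  shows "convex_quadratic (\<lambda>u. f u + g u)"
proof -
  obtain Q a c Q' a' c' where
    f: "\<forall>u. f u = (\<Sum>v\<in>UNIV. \<Sum>w\<in>UNIV. Q v w * u v * u w) + (\<Sum>v\<in>UNIV. a v * u v) + c"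
       "\<forall>u. 0 \<le> (\<Sum>v\<in>UNIV. \<Sum>w\<in>UNIV. Q v w * u v * u w)" and
    g: "\<forall>u. g u = (\<Sum>v\<in>UNIV. \<Sum>w\<in>UNIV. Q' v w * u v * u w) + (\<Sum>v\<in>UNIV. a' v * u v) + c'"
       "\<forall>u. 0 \<le> (\<Sum>v\<in>UNIV. \<Sum>w\<in>UNIV. Q' v w * u v * u w)"
    using assms unfolding convex_quadratic_def by blast
  show ?thesis unfolding convex_quadratic_def
    by (intro exI[of _ "\<lambda>v w. Q v w + Q' v w"] exI[of _ "\<lambda>v. a v + a' v"] exI[of _ "c + c'"])
       (use f g in \<open>simp add: distrib_right sum.distrib add_nonneg_nonneg\<close>)
qed

lemma convex_quadratic_sum:
  "finite A \<Longrightarrow> (\<And>i. i \<in> A \<Longrightarrow> convex_quadratic (f i)) \<Longrightarrow> convex_quadratic (\<lambda>u. \<Sum>i\<in>A. f i u)"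
proof (induction A rule: finite_induct)
  case empty
  show ?case using convex_quadratic_affine[OF affine_fun_const[of 0]] by simp
next
  case (insert i A)
  then show ?case using convex_quadratic_add[of "f i" "\<lambda>u. \<Sum>i\<in>A. f i u"] by simp
qed

lemma convex_quadratic_comp_linear:
  fixes q :: "'a::euclidean_space \<Rightarrow> real"
  assumes q: "cq_or_lin q" and L: "\<And>u. L u = (\<Sum>v\<in>UNIV. u v *\<^sub>R B v)"
  shows "convex_quadratic (\<lambda>u. q (L u))"
proof -
  obtain Q c d where Q: "linear Q" "\<And>v. 0 \<le> v \<bullet> Q v" "\<And>v. q v = v \<bullet> Q v + c \<bullet> v + d"
    using q unfolding cq_or_lin_def by blast
  have quad: "L u \<bullet> Q (L u) = (\<Sum>v\<in>UNIV. \<Sum>w\<in>UNIV. (B v \<bullet> Q (B w)) * u v * u w)" for u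
    unfolding L using Q(1)
    apply (simp add: linear_sum linear_scale inner_sum_left inner_sum_right sum_distrib_left)
    apply (subst sum.swap)
    apply (simp add: ac_simps)
    done
  have lin: "c \<bullet> L u = (\<Sum>v\<in>UNIV. (c \<bullet> B v) * u v)" for u
    unfolding L by (simp add: inner_sum_right mult.commute)
  show ?thesis unfolding convex_quadratic_def
    by (intro exI[of _ "\<lambda>v w. B v \<bullet> Q (B w)"] exI[of _ "\<lambda>v. c \<bullet> B v"] exI[of _ d] conjI allI)
       (simp_all only: Q(3) quad lin Q(2) flip: quad)
qed

lemma vec_of_coords_eq_sum:
  fixes u :: "'v::finite \<Rightarrow> real"
  shows "(\<chi> i. u (h i)) = (\<Sum>v\<in>UNIV. u v *\<^sub>R (\<chi> i. if v = h i then 1 else 0))"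
proof -
  have "u v * (if v = w then 1 else 0) = (if v = w then u v else 0)" for v w by simp
  then show ?thesis by (simp add: vec_eq_iff)
qed

lemma vec_of_coords2_eq_sum:
  fixes u :: "'v::finite \<Rightarrow> real"
  shows "(\<chi> i l. u (h i l)) = (\<Sum>v\<in>UNIV. u v *\<^sub>R (\<chi> i l. if v = h i l then 1 else 0))"
proof -
  have "u v * (if v = w then 1 else 0) = (if v = w then u v else 0)" for v w by simp
  then show ?thesis by (simp add: vec_eq_iff)
qed

lemma finite_program_as_mip:
  fixes Phi :: "('v::finite \<Rightarrow> real) \<Rightarrow> bool" and obj :: "('v \<Rightarrow> real) \<Rightarrow> real"
  assumes Phi: "lin_ineq_definable Phi" and obj: "convex_quadratic obj"
  obtains N Bin R A b Q c d and e :: "'v \<Rightarrow> nat"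
  where "inj e" "\<And>v. e v < N" "Bin = e ` Bs" "psd N Q"
    "\<And>z. mip_feasible N Bin R A b z \<Longrightarrow> Phi (z \<circ> e) \<and> (\<forall>v\<in>Bs. z (e v) \<in> {0,1})"
    "\<And>u. Phi u \<Longrightarrow> \<forall>v\<in>Bs. u v \<in> {0,1} \<Longrightarrow> \<exists>z. mip_feasible N Bin R A b z \<and> z \<circ> e = u"
    "\<And>z. mip_obj N Q c d z = obj (z \<circ> e)"
proof -
  obtain L where L: "\<And>u. Phi u \<longleftrightarrow> (\<forall>(a, c)\<in>set L. (\<Sum>v\<in>UNIV. a v * u v) \<le> c)"
    using Phi unfolding lin_ineq_definable_def by blast
  obtain Q a d where
    Q: "\<And>u. obj u = (\<Sum>v\<in>UNIV. \<Sum>w\<in>UNIV. Q v w * u v * u w) + (\<Sum>v\<in>UNIV. a v * u v) + d"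
       "\<And>u. 0 \<le> (\<Sum>v\<in>UNIV. \<Sum>w\<in>UNIV. Q v w * u v * u w)"
    using obj unfolding convex_quadratic_def by blast
  define N where "N = CARD('v)"
  obtain e :: "'v \<Rightarrow> nat" where bij: "bij_betw e UNIV {..<N}"
    using ex_bij_betw_finite_nat[of "UNIV :: 'v set"] unfolding N_def atLeast0LessThan by auto
  define e' where "e' = inv_into UNIV e"
  have inj: "inj e" and eN: "e v < N" and e'e: "e' (e v) = v" for v
    using bij unfolding e'_def bij_betw_def by auto
  have reindex: "(\<Sum>j<N. h j) = (\<Sum>v\<in>UNIV. h (e v))" for h :: "nat \<Rightarrow> real"
    using sum.reindex_bij_betw[OF bij, of h] by simp
  define A where "A r j = fst (L ! r) (e' j)" for r j
  define b where "b r = snd (L ! r)" for r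
  have feasible: "mip_feasible N (e ` Bs) (length L) A b z \<longleftrightarrow>
      (\<forall>j\<ge>N. z j = 0) \<and> Phi (z \<circ> e) \<and> (\<forall>v\<in>Bs. z (e v) \<in> {0,1})" for z
    unfolding mip_feasible_def L A_def b_def reindex e'e
    by (auto simp: case_prod_beta all_set_conv_all_nth)
  have lift: "\<exists>z. mip_feasible N (e ` Bs) (length L) A b z \<and> z \<circ> e = u"
    if "Phi u" "\<forall>v\<in>Bs. u v \<in> {0,1}" for u
    using that by (intro exI[of _ "\<lambda>j. if j < N then u (e' j) else 0"]) (simp add: feasible o_def eN e'e)
  show thesis
  proof (rule that[OF inj eN refl])
    show "psd N (\<lambda>j k. Q (e' j) (e' k))"
      unfolding psd_def reindex e'e using Q(2) by simp
    show "mip_obj N (\<lambda>j k. Q (e' j) (e' k)) (\<lambda>j. a (e' j)) d z = obj (z \<circ> e)" for z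
      unfolding mip_obj_def reindex e'e Q(1) by simp
  qed (use feasible lift in auto)
qed

lemma binary_sum_eq_1_imp_indicator:
  fixes h :: "'a \<Rightarrow> real"
  assumes "finite A" "\<forall>x\<in>A. h x \<in> {0,1}" "sum h A = 1"
  obtains s where "s \<in> A" "h s = 1" "\<And>x. x \<in> A \<Longrightarrow> x \<noteq> s \<Longrightarrow> h x = 0"
proof -
  have "\<not> (\<forall>x\<in>A. h x = 0)"
  proof
    assume "\<forall>x\<in>A. h x = 0"
    then have "sum h A = 0" by simp
    with assms(3) show False by simp
  qed
  then obtain s where s: "s \<in> A" "h s = 1" using assms(2) by auto
  have "h x = 0" if "x \<in> A" "x \<noteq> s" for x
  proof (rule ccontr)
    assume "h x \<noteq> 0"
    then have "h x = 1" using assms(2) that by auto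
    moreover have "sum h A = h s + h x + sum h (A - {s} - {x})"
      using assms(1) s(1) that by (simp add: sum.remove)
    moreover have "0 \<le> sum h (A - {s} - {x})" using assms(2) by (intro sum_nonneg) auto
    ultimately show False using s(2) assms(3) by linarith
  qed
  with s show thesis by (rule that)
qed

lemma sum_mult_abs_le:
  fixes c v :: "'a \<Rightarrow> real"
  assumes "\<forall>l\<in>A. \<bar>v l\<bar> \<le> R"
  shows "\<bar>\<Sum>l\<in>A. c l * v l\<bar> \<le> (\<Sum>l\<in>A. \<bar>c l\<bar>) * R"
proof -
  have "\<bar>\<Sum>l\<in>A. c l * v l\<bar> \<le> (\<Sum>l\<in>A. \<bar>c l\<bar> * R)"
    using assms by (intro order_trans[OF sum_abs] sum_mono) (simp add: abs_mult mult_left_mono)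
  then show ?thesis by (simp add: sum_distrib_right)
qed

lemma inner_abs_le:
  fixes c v :: "real^'m::finite"
  assumes "\<forall>l. \<bar>c $ l\<bar> \<le> C" "\<forall>l. \<bar>v $ l\<bar> \<le> B" "0 \<le> B"
  shows "\<bar>c \<bullet> v\<bar> \<le> (\<Sum>l\<in>(UNIV::'m set). C) * B"
proof -
  have "\<bar>c \<bullet> v\<bar> \<le> (\<Sum>l\<in>UNIV. \<bar>c $ l\<bar>) * B"
    unfolding inner_vec_def inner_real_def using assms(2) by (intro sum_mult_abs_le) auto
  also have "\<dots> \<le> (\<Sum>l\<in>(UNIV::'m set). C) * B"
    using assms(1,3) by (intro mult_right_mono sum_mono) auto
  finally show ?thesis .
qed

lemma grad_affine:
  fixes c :: "'a::real_inner"
  assumes "\<And>v. \<phi> v = c \<bullet> v + k"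
  shows "grad \<phi> w = c"
proof -
  have \<phi>: "\<phi> = (\<lambda>v. v \<bullet> c + k)" using assms by (auto simp: inner_commute)
  have deriv: "GDERIV \<phi> w :> c"
    unfolding gderiv_def \<phi> by (auto intro!: derivative_eq_intros)
  have unique: "D = c" if "GDERIV \<phi> w :> D" for D
  proof -
    have "(\<lambda>h. h \<bullet> D) = (\<lambda>h. h \<bullet> c)"
      using has_derivative_unique that deriv unfolding gderiv_def by blast
    then have "(D - c) \<bullet> D = (D - c) \<bullet> c" by metis
    then have "(D - c) \<bullet> (D - c) = 0" by (simp add: inner_diff_right)
    then show "D = c" by simp
  qed
  have "GDERIV \<phi> w :> grad \<phi> w" unfolding grad_def by (rule someI[of _ c]) (rule deriv)
  then show ?thesis using unique by blast
qed

lemma has_real_derivative_pos_imp_less_left: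
  assumes "(\<phi> has_real_derivative D) (at 0)" "0 < D" "0 < c"
  obtains h where "0 < h" "h \<le> c" "\<phi> (- h) < \<phi> 0"
proof -
  obtain d where "0 < d" "\<And>h. 0 < h \<Longrightarrow> h < d \<Longrightarrow> \<phi> (0 - h) < \<phi> 0"
    using DERIV_pos_inc_left[OF assms(1,2)] by blast
  then show thesis using assms(3) by (intro that[of "min (d / 2) c"]) auto
qed

section \<open>Games with affine data\<close>

definition feasible_box :: "('p \<Rightarrow> real \<Rightarrow> real^'m \<Rightarrow> real^'k) \<Rightarrow> real \<Rightarrow> bool" where
  "feasible_box g R \<longleftrightarrow> (\<forall>i xi v l. xi \<in> {0,1} \<longrightarrow> v \<in> Kset g i xi \<longrightarrow> \<bar>v $ l\<bar> \<le> R)"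

definition switch_cost_bound ::
  "('p \<Rightarrow> real \<Rightarrow> real^'m \<Rightarrow> (real^'m)^'p \<Rightarrow> real) \<Rightarrow> real \<Rightarrow> real \<Rightarrow> bool" where
  "switch_cost_bound f R D \<longleftrightarrow> (\<forall>i Y v v'. (\<forall>j l. \<bar>Y $ j $ l\<bar> \<le> R) \<longrightarrow> (\<forall>l. \<bar>v $ l\<bar> \<le> R) \<longrightarrow>
     (\<forall>l. \<bar>v' $ l\<bar> \<le> R) \<longrightarrow> \<bar>f i 1 v Y - f i 0 v' Y\<bar> \<le> D)"

lemma A1_feasible_box:
  assumes "A1 f g"
  obtains R where "0 \<le> R" "feasible_box g R"
proof -
  have "compact (\<Union>i. Kset g i 0 \<union> Kset g i 1)"
    using assms unfolding A1_def by (intro compact_UN compact_Un) auto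
  then obtain B where B: "\<And>v. v \<in> (\<Union>i. Kset g i 0 \<union> Kset g i 1) \<Longrightarrow> norm v \<le> B"
    using compact_imp_bounded bounded_iff by metis
  show thesis
  proof (rule that[of "max B 0"])
    show "feasible_box g (max B 0)"
      unfolding feasible_box_def
    proof (intro allI impI)
      fix i xi v l assume "xi \<in> {0,1}" "v \<in> Kset g i xi"
      then have "norm v \<le> B" using B by auto
      then show "\<bar>v $ l\<bar> \<le> max B 0" using component_le_norm_cart[of v l] by linarith
    qed
  qed simp
qed

text \<open>Under (A3) the part of \<open>f\<^sub>i\<close> not involving \<open>y\<^sub>i\<close> may depend on the whole profile;
  only its jump \<open>\<alpha> i\<close> between \<open>x\<^sub>i = 1\<close> and \<open>x\<^sub>i = 0\<close> matters, and it is constant.\<close>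

locale affine_game =
  fixes f :: "'p::finite \<Rightarrow> real \<Rightarrow> real^'m::finite \<Rightarrow> (real^'m)^'p \<Rightarrow> real"
    and g :: "'p \<Rightarrow> real \<Rightarrow> real^'m \<Rightarrow> real^'k::finite"
    and c0 :: "'p \<Rightarrow> real^'m" and M :: "'p \<Rightarrow> 'p \<Rightarrow> real^'m^'m"
    and rest :: "'p \<Rightarrow> real \<Rightarrow> (real^'m)^'p \<Rightarrow> real" and \<alpha> :: "'p \<Rightarrow> real"
    and a :: "'p \<Rightarrow> real^'k" and A :: "'p \<Rightarrow> real^'m^'k" and b :: "'p \<Rightarrow> real^'k"
  assumes f_eq: "f i xi v Y = (c0 i + (\<Sum>j\<in>UNIV-{i}. M i j *v Y $ j)) \<bullet> v + rest i xi Y"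
    and rest_switch: "rest i 1 Y - rest i 0 Y = \<alpha> i"
    and g_eq: "g i xi v = xi *\<^sub>R a i + A i *v v - b i"

lemma A3_imp_affine_game:
  fixes f :: "'p::finite \<Rightarrow> real \<Rightarrow> real^'m::finite \<Rightarrow> (real^'m)^'p \<Rightarrow> real"
    and g :: "'p \<Rightarrow> real \<Rightarrow> real^'m \<Rightarrow> real^'k::finite"
  assumes "A3 f g"
  obtains c0 M rest \<alpha> a A b where "affine_game f g c0 M rest \<alpha> a A b"
proof -
  have "\<forall>i. \<exists>c0 M rest \<alpha>. (\<forall>xi v Y. f i xi v Y = (c0 + (\<Sum>j\<in>UNIV-{i}. M j *v Y $ j)) \<bullet> v + rest xi Y)
      \<and> (\<forall>Y. rest 1 Y - rest 0 Y = \<alpha>)"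
  proof
    fix i
    obtain fx fy \<alpha> \<beta> \<gamma> c0 M h where
      "\<forall>xi v Y. f i xi v Y = fx xi Y + fy v Y"
      "\<forall>xi Y. fx xi Y = \<alpha> * xi + (\<Sum>j\<in>UNIV-{i}. \<beta> j \<bullet> Y $ j) + \<gamma>"
      "\<forall>v Y. fy v Y = (c0 + (\<Sum>j\<in>UNIV-{i}. M j *v Y $ j)) \<bullet> v + h Y"
      using assms unfolding A3_def by blast
    then show "\<exists>c0 M rest \<alpha>. (\<forall>xi v Y. f i xi v Y = (c0 + (\<Sum>j\<in>UNIV-{i}. M j *v Y $ j)) \<bullet> v + rest xi Y)
        \<and> (\<forall>Y. rest 1 Y - rest 0 Y = \<alpha>)"
      by (intro exI[of _ c0] exI[of _ M] exI[of _ "\<lambda>xi Y. fx xi Y + h Y"] exI[of _ \<alpha>]) simp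
  qed
  then obtain c0 M rest \<alpha> where f:
    "\<forall>i. (\<forall>xi v Y. f i xi v Y = (c0 i + (\<Sum>j\<in>UNIV-{i}. M i j *v Y $ j)) \<bullet> v + rest i xi Y)
       \<and> (\<forall>Y. rest i 1 Y - rest i 0 Y = \<alpha> i)"
    unfolding choice_iff by blast
  have "\<forall>i. \<exists>(a::real^'k) (A::real^'m^'k) b. \<forall>xi v. g i xi v = xi *\<^sub>R a + A *v v - b"
    using assms unfolding A3_def by blast
  then obtain a A b where g: "\<forall>i. \<forall>xi v. g i xi v = xi *\<^sub>R a i + A i *v v - b i"
    unfolding choice_iff by blast
  show thesis
    by (rule that[of c0 M rest \<alpha> a A b], unfold_locales) (use f g in auto)
qed

context affine_game
begin

definition cost_vec :: "'p \<Rightarrow> (real^'m)^'p \<Rightarrow> real^'m" where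
  "cost_vec i Y = c0 i + (\<Sum>j\<in>UNIV-{i}. M i j *v Y $ j)"

lemma f_eq_cost_vec: "f i xi v Y = cost_vec i Y \<bullet> v + rest i xi Y"
  unfolding cost_vec_def by (rule f_eq)

lemma f_switch: "f i 1 v Y - f i 0 v' Y = \<alpha> i + cost_vec i Y \<bullet> v - cost_vec i Y \<bullet> v'"
  using rest_switch[of i Y] by (simp add: f_eq_cost_vec)

lemma cost_vec_component:
  "cost_vec i Y $ l = c0 i $ l + (\<Sum>j\<in>UNIV-{i}. \<Sum>l'\<in>UNIV. M i j $ l $ l' * Y $ j $ l')"
  unfolding cost_vec_def by (simp add: matrix_vector_mult_def)

lemma g_component: "g i xi v $ l = xi * a i $ l + (\<Sum>l'\<in>UNIV. A i $ l $ l' * v $ l') - b i $ l"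
  unfolding g_eq by (simp add: matrix_vector_mult_def)

lemma KKT_iff:
  "KKT f g i xi Y v lam \<longleftrightarrow> (\<forall>l. 0 \<le> lam $ l) \<and>
     cost_vec i Y + (\<Sum>l\<in>UNIV. lam $ l *\<^sub>R A i $ l) = 0 \<and> (\<forall>l. g i xi v $ l \<le> 0) \<and>
     (\<forall>l. lam $ l * g i xi v $ l = 0)"
proof -
  have "grad (\<lambda>v. f i xi v Y) w = cost_vec i Y" for w
    by (rule grad_affine[where k = "rest i xi Y"]) (simp add: f_eq_cost_vec)
  moreover have "grad (\<lambda>v. g i xi v $ l) w = A i $ l" for l w
    by (rule grad_affine[where k = "xi * a i $ l - b i $ l"]) (simp add: g_eq matrix_vector_mul_component)
  ultimately show ?thesis unfolding KKT_def by simp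
qed

text \<open>LP duality: along a KKT pair the bilinear term \<open>c(y\<^sub>-\<^sub>i) \<bullet> y\<^sub>i\<close> equals a term linear in the
  multipliers.\<close>

lemma KKT_cost_value:
  assumes "KKT f g i xi Y v lam"
  shows "cost_vec i Y \<bullet> v = - (\<Sum>l\<in>UNIV. lam $ l * (b i $ l - xi * a i $ l))"
proof -
  have stat: "cost_vec i Y = - (\<Sum>l\<in>UNIV. lam $ l *\<^sub>R A i $ l)"
    and compl: "\<And>l. lam $ l * g i xi v $ l = 0"
    using assms unfolding KKT_iff by (auto simp: add_eq_0_iff)
  have dual: "lam $ l * (A i $ l \<bullet> v) = lam $ l * (b i $ l - xi * a i $ l)" for l
    using compl[of l] unfolding g_eq by (simp add: matrix_vector_mul_component algebra_simps)
  have "cost_vec i Y \<bullet> v = - (\<Sum>l\<in>UNIV. lam $ l * (A i $ l \<bullet> v))"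
    unfolding stat by (simp add: inner_sum_left)
  also have "\<dots> = - (\<Sum>l\<in>UNIV. lam $ l * (b i $ l - xi * a i $ l))"
    using sum.cong[OF refl dual] by simp
  finally show ?thesis .
qed

lemma cost_vec_bounded:
  obtains C where "\<And>i Y l. \<forall>j l'. \<bar>Y $ j $ l'\<bar> \<le> R \<Longrightarrow> \<bar>cost_vec i Y $ l\<bar> \<le> C"
proof -
  define W where "W il = \<bar>c0 (fst il) $ snd il\<bar>
    + (\<Sum>j\<in>UNIV-{fst il}. (\<Sum>l'\<in>UNIV. \<bar>M (fst il) j $ snd il $ l'\<bar>) * R)" for il
  have "\<bar>cost_vec i Y $ l\<bar> \<le> W (i, l)" if Y: "\<forall>j l'. \<bar>Y $ j $ l'\<bar> \<le> R" for i Y l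
  proof -
    have "\<bar>\<Sum>j\<in>UNIV-{i}. \<Sum>l'\<in>UNIV. M i j $ l $ l' * Y $ j $ l'\<bar>
        \<le> (\<Sum>j\<in>UNIV-{i}. (\<Sum>l'\<in>UNIV. \<bar>M i j $ l $ l'\<bar>) * R)"
      using Y by (intro order_trans[OF sum_abs] sum_mono sum_mult_abs_le) auto
    then show ?thesis unfolding cost_vec_component W_def prod.sel by linarith
  qed
  moreover have "W il \<le> Max (range W)" for il by (rule Max_ge) auto
  ultimately show thesis using that order_trans by meson
qed

lemma g_bounded:
  obtains C where "\<And>i xi v l. xi \<in> {0,1} \<Longrightarrow> \<forall>l'. \<bar>v $ l'\<bar> \<le> R \<Longrightarrow> \<bar>g i xi v $ l\<bar> \<le> C"
proof -
  define W where "W il = \<bar>a (fst il) $ snd il\<bar> + (\<Sum>l'\<in>UNIV. \<bar>A (fst il) $ snd il $ l'\<bar>) * R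
    + \<bar>b (fst il) $ snd il\<bar>" for il
  have "\<bar>g i xi v $ l\<bar> \<le> W (i, l)" if "xi \<in> {0,1}" "\<forall>l'. \<bar>v $ l'\<bar> \<le> R" for i xi v l
  proof -
    have "\<bar>xi * a i $ l\<bar> \<le> \<bar>a i $ l\<bar>" using that(1) by auto
    moreover have "\<bar>\<Sum>l'\<in>UNIV. A i $ l $ l' * v $ l'\<bar> \<le> (\<Sum>l'\<in>UNIV. \<bar>A i $ l $ l'\<bar>) * R"
      using that(2) by (intro sum_mult_abs_le) auto
    ultimately show ?thesis unfolding g_component W_def prod.sel by linarith
  qed
  moreover have "W il \<le> Max (range W)" for il by (rule Max_ge) auto
  ultimately show thesis using that order_trans by meson
qed

lemma switch_cost_bounded:
  assumes "0 \<le> R"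
  obtains D where "0 \<le> D" "switch_cost_bound f R D"
proof -
  obtain C where C: "\<And>i Y l. \<forall>j l'. \<bar>Y $ j $ l'\<bar> \<le> R \<Longrightarrow> \<bar>cost_vec i Y $ l\<bar> \<le> C"
    using cost_vec_bounded by blast
  define D where "D = (\<Sum>i\<in>UNIV. \<bar>\<alpha> i\<bar>) + 2 * ((\<Sum>l\<in>(UNIV::'m set). C) * R)"
  have bound: "\<bar>f i 1 v Y - f i 0 v' Y\<bar> \<le> D"
    if Y: "\<forall>j l. \<bar>Y $ j $ l\<bar> \<le> R" and "\<forall>l. \<bar>v $ l\<bar> \<le> R" "\<forall>l. \<bar>v' $ l\<bar> \<le> R" for i Y v v'
  proof -
    have "\<bar>cost_vec i Y \<bullet> w\<bar> \<le> (\<Sum>l\<in>(UNIV::'m set). C) * R" if "\<forall>l. \<bar>w $ l\<bar> \<le> R" for w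
      using C[OF Y] that assms by (intro inner_abs_le) auto
    from this[of v] this[of v'] that(2,3) have
      "\<bar>cost_vec i Y \<bullet> v\<bar> \<le> (\<Sum>l\<in>(UNIV::'m set). C) * R"
      "\<bar>cost_vec i Y \<bullet> v'\<bar> \<le> (\<Sum>l\<in>(UNIV::'m set). C) * R"
      by blast+
    moreover have "\<bar>\<alpha> i\<bar> \<le> (\<Sum>i\<in>UNIV. \<bar>\<alpha> i\<bar>)" by (rule member_le_sum) auto
    ultimately show ?thesis unfolding f_switch D_def by linarith
  qed
  have "0 \<le> D" using bound[of 0 0 0 undefined] assms by simp
  moreover have "switch_cost_bound f R D" unfolding switch_cost_bound_def using bound by blast
  ultimately show thesis by (rule that)
qed

end

section \<open>The big-M problem (P)\<close>

lemma P_feasD: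
  assumes "P_feas f g K x y yt1 yt0 l1 l0 k1 k0 z1 z0"
  shows "x $ i \<in> {0,1}" "KKT f g i 1 y (yt1 $ i) (l1 $ i)" "KKT f g i 0 y (yt0 $ i) (l0 $ i)"
    "0 \<le> k1 $ i" "0 \<le> k0 $ i" "0 \<le> z1 $ i" "0 \<le> z0 $ i"
    "f i 1 (yt1 $ i) y + k1 $ i - z1 $ i - k0 $ i + z0 $ i = f i 0 (yt0 $ i) y"
    "k1 $ i + z1 $ i \<le> x $ i * K" "k0 $ i + z0 $ i \<le> (1 - x $ i) * K"
    "yt0 $ i $ l - x $ i * K \<le> y $ i $ l" "y $ i $ l \<le> yt0 $ i $ l + x $ i * K"
    "yt1 $ i $ l - (1 - x $ i) * K \<le> y $ i $ l" "y $ i $ l \<le> yt1 $ i $ l + (1 - x $ i) * K"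
  using assms unfolding P_feas_def by blast+

lemma P_feasI:
  assumes "\<And>i. x $ i \<in> {0,1}" "\<And>i. KKT f g i 1 y (yt1 $ i) (l1 $ i)" "\<And>i. KKT f g i 0 y (yt0 $ i) (l0 $ i)"
    "\<And>i. 0 \<le> k1 $ i" "\<And>i. 0 \<le> k0 $ i" "\<And>i. 0 \<le> z1 $ i" "\<And>i. 0 \<le> z0 $ i"
    "\<And>i. f i 1 (yt1 $ i) y + k1 $ i - z1 $ i - k0 $ i + z0 $ i = f i 0 (yt0 $ i) y"
    "\<And>i. k1 $ i + z1 $ i \<le> x $ i * K" "\<And>i. k0 $ i + z0 $ i \<le> (1 - x $ i) * K"
    "\<And>i l. \<bar>y $ i $ l - yt0 $ i $ l\<bar> \<le> x $ i * K"
    "\<And>i l. \<bar>y $ i $ l - yt1 $ i $ l\<bar> \<le> (1 - x $ i) * K"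
  shows "P_feas f g K x y yt1 yt0 l1 l0 k1 k0 z1 z0"
proof -
  have "yt0 $ i $ l - x $ i * K \<le> y $ i $ l \<and> y $ i $ l \<le> yt0 $ i $ l + x $ i * K"
    and "yt1 $ i $ l - (1 - x $ i) * K \<le> y $ i $ l \<and> y $ i $ l \<le> yt1 $ i $ l + (1 - x $ i) * K" for i l
    using assms(11,12)[of i l] by (simp_all add: abs_le_iff)
  then show ?thesis unfolding P_feas_def using assms(1-10) by blast
qed

text \<open>The big-M rows force \<open>y\<^sub>i\<close> to be the KKT point of the branch \<open>x\<^sub>i\<close> and switch off
  \<open>\<kappa>\<close> and \<open>\<zeta>\<close> of the other branch, so each player sees a single comparison of two branches.\<close>

lemma P_feas_player_view:
  assumes A1: "A1 f g" and P: "P_feas f g K x y yt1 yt0 l1 l0 k1 k0 z1 z0"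
  shows "x $ i \<in> {0,1}" and "is_argmin f g i (x $ i) y (y $ i)"
    and "\<exists>yx. is_argmin f g i (1 - x $ i) y yx \<and>
           f i (x $ i) (y $ i) y + (k1 + k0) $ i - (z1 + z0) $ i = f i (1 - x $ i) yx y"
    and "0 \<le> (k1 + k0) $ i" "0 \<le> (z1 + z0) $ i"
    and "(k1 $ i = 0 \<and> z1 $ i = 0) \<or> (k0 $ i = 0 \<and> z0 $ i = 0)"
proof -
  note D = P_feasD[OF P, of i]
  have argmin: "is_argmin f g i 1 y (yt1 $ i)" "is_argmin f g i 0 y (yt0 $ i)"
    using A1 D(2,3) unfolding A1_def by blast+
  have "is_argmin f g i (x $ i) y (y $ i) \<and>
      (\<exists>yx. is_argmin f g i (1 - x $ i) y yx \<and>
           f i (x $ i) (y $ i) y + (k1 + k0) $ i - (z1 + z0) $ i = f i (1 - x $ i) yx y) \<and>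
      ((k1 $ i = 0 \<and> z1 $ i = 0) \<or> (k0 $ i = 0 \<and> z0 $ i = 0))"
  proof (cases "x $ i = 1")
    case True
    have "y $ i = yt1 $ i"
      using P_feasD(13,14)[OF P, of i] True by (simp add: vec_eq_iff order_antisym)
    moreover have "k0 $ i = 0" "z0 $ i = 0" using D(5,7,10) True by auto
    ultimately show ?thesis
      using True argmin D(8) by (intro conjI exI[of _ "yt0 $ i"]) simp_all
  next
    case False
    then have x0: "x $ i = 0" using D(1) by simp
    have "y $ i = yt0 $ i"
      using P_feasD(11,12)[OF P, of i] x0 by (simp add: vec_eq_iff order_antisym)
    moreover have "k1 $ i = 0" "z1 $ i = 0" using D(4,6,9) x0 by auto
    ultimately show ?thesis
      using x0 argmin D(8) by (intro conjI exI[of _ "yt1 $ i"]) (simp_all add: algebra_simps)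
  qed
  then show "is_argmin f g i (x $ i) y (y $ i)"
    "\<exists>yx. is_argmin f g i (1 - x $ i) y yx \<and>
           f i (x $ i) (y $ i) y + (k1 + k0) $ i - (z1 + z0) $ i = f i (1 - x $ i) yx y"
    "(k1 $ i = 0 \<and> z1 $ i = 0) \<or> (k0 $ i = 0 \<and> z0 $ i = 0)"
    by blast+
  show "x $ i \<in> {0,1}" "0 \<le> (k1 + k0) $ i" "0 \<le> (z1 + z0) $ i" using D(1,4-7) by auto
qed

lemma P_feas_zero_imp_NE:
  assumes "A1 f g" "P_feas f g K x y yt1 yt0 l1 l0 k1 k0 0 0"
  shows "NE f g x y"
  unfolding NE_def
proof
  fix i
  note V = P_feas_player_view[OF assms, of i]
  obtain yx where yx: "is_argmin f g i (1 - x $ i) y yx"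
    "f i (x $ i) (y $ i) y + (k1 + k0) $ i = f i (1 - x $ i) yx y"
    using V(3) by auto
  show "x $ i \<in> {0,1} \<and> is_argmin f g i (x $ i) y (y $ i) \<and>
      (\<exists>yx. is_argmin f g i (1 - x $ i) y yx \<and> f i (x $ i) (y $ i) y \<le> f i (1 - x $ i) yx y)"
    using V(1,2,4) yx by (intro conjI exI[of _ yx]) auto
qed

text \<open>Minimality of the compensation: \<open>\<zeta>\<^sub>i\<close> can only exceed the gain of switching when
  \<open>\<kappa>\<^sub>i > 0\<close>, and complementarity rules that out.\<close>

lemma P_feas_complementary_imp_BQE:
  assumes "A1 f g" "P_feas f g K x y yt1 yt0 l1 l0 k1 k0 z1 z0"
    and compl: "\<And>i. (z1 $ i = 0 \<or> k1 $ i = 0) \<and> (z0 $ i = 0 \<or> k0 $ i = 0)"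
  shows "BQE f g x y (z1 + z0)"
  unfolding BQE_def
proof
  fix i
  note V = P_feas_player_view[OF assms(1,2), of i]
  obtain yx where yx: "is_argmin f g i (1 - x $ i) y yx"
    "f i (x $ i) (y $ i) y + (k1 + k0) $ i - (z1 + z0) $ i = f i (1 - x $ i) yx y"
    using V(3) by blast
  have "(z1 + z0) $ i = 0 \<or> (k1 + k0) $ i = 0" using V(6) compl[of i] by auto
  then have "\<zeta>' \<ge> 0 \<Longrightarrow> f i (x $ i) (y $ i) y - \<zeta>' \<le> f i (1 - x $ i) yx y \<Longrightarrow> (z1 + z0) $ i \<le> \<zeta>'"
    for \<zeta>' using yx(2) by auto
  then show "x $ i \<in> {0,1} \<and> is_argmin f g i (x $ i) y (y $ i) \<and> 0 \<le> (z1 + z0) $ i \<and>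
      (\<exists>yx. is_argmin f g i (1 - x $ i) y yx \<and>
         f i (x $ i) (y $ i) y - (z1 + z0) $ i \<le> f i (1 - x $ i) yx y \<and>
         (\<forall>\<zeta>'\<ge>0. f i (x $ i) (y $ i) y - \<zeta>' \<le> f i (1 - x $ i) yx y \<longrightarrow> (z1 + z0) $ i \<le> \<zeta>'))"
    using V(1,2,4,5) yx by (intro conjI exI[of _ yx]) auto
qed



lemma P_feas_of_responses:
  assumes A1: "A1 f g" and box: "feasible_box g R" and sw: "switch_cost_bound f R D"
    and K: "2 * R \<le> K" "3 * D \<le> K"
    and x: "\<And>i. x $ i \<in> {0,1}" and own: "\<And>i. is_argmin f g i (x $ i) y (y $ i)"
    and other: "\<And>i. is_argmin f g i (1 - x $ i) y (yx i)"
    and \<zeta>: "\<And>i. 0 \<le> \<zeta> i" "\<And>i. \<zeta> i \<le> D"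
    and compensated: "\<And>i. f i (x $ i) (y $ i) y - \<zeta> i \<le> f i (1 - x $ i) (yx i) y"
  shows "\<exists>yt1 yt0 l1 l0 k1 k0. P_feas f g K x y yt1 yt0 l1 l0 k1 k0
            (\<chi> i. if x $ i = 1 then \<zeta> i else 0) (\<chi> i. if x $ i = 1 then 0 else \<zeta> i)"
proof -
  have x': "1 - x $ i \<in> {0,1}" for i using x[of i] by auto
  have "\<forall>i. \<exists>lam. KKT f g i (x $ i) y (y $ i) lam" "\<forall>i. \<exists>lam. KKT f g i (1 - x $ i) y (yx i) lam"
    using A1 own other x x' unfolding A1_def by blast+
  then obtain lam_own lam_other where
    lam_own: "\<And>i. KKT f g i (x $ i) y (y $ i) (lam_own i)" and
    lam_other: "\<And>i. KKT f g i (1 - x $ i) y (yx i) (lam_other i)"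
    by metis
  have y_box: "\<bar>y $ i $ l\<bar> \<le> R" for i l
    using box own[of i] x[of i] unfolding feasible_box_def is_argmin_def by blast
  have yx_box: "\<bar>yx i $ l\<bar> \<le> R" for i l
    using box other[of i] x'[of i] unfolding feasible_box_def is_argmin_def by blast
  have gap: "\<bar>f i (x $ i) (y $ i) y - f i (1 - x $ i) (yx i) y\<bar> \<le> D" for i
  proof -
    have "\<bar>f i 1 v y - f i 0 v' y\<bar> \<le> D" if "\<forall>l. \<bar>v $ l\<bar> \<le> R" "\<forall>l. \<bar>v' $ l\<bar> \<le> R" for v v'
      using sw y_box that unfolding switch_cost_bound_def by blast
    from this[of "y $ i" "yx i"] this[of "yx i" "y $ i"] show ?thesis
      using x[of i] y_box yx_box by (auto simp: abs_minus_commute[of "f i 0 _ y"])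
  qed
  define yt1 where "yt1 = (\<chi> i. if x $ i = 1 then y $ i else yx i)"
  define yt0 where "yt0 = (\<chi> i. if x $ i = 1 then yx i else y $ i)"
  define l1 where "l1 = (\<chi> i. if x $ i = 1 then lam_own i else lam_other i)"
  define l0 where "l0 = (\<chi> i. if x $ i = 1 then lam_other i else lam_own i)"
  define k1 where "k1 = (\<chi> i. if x $ i = 1 then f i 0 (yx i) y - f i 1 (y $ i) y + \<zeta> i else 0)"
  define k0 where "k0 = (\<chi> i. if x $ i = 1 then 0 else f i 1 (yx i) y - f i 0 (y $ i) y + \<zeta> i)"
  have cases: "x $ i = 1 \<or> x $ i = 0" for i using x[of i] by auto
  have "P_feas f g K x y yt1 yt0 l1 l0 k1 k0
      (\<chi> i. if x $ i = 1 then \<zeta> i else 0) (\<chi> i. if x $ i = 1 then 0 else \<zeta> i)"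
  proof (rule P_feasI)
    fix i
    show "x $ i \<in> {0,1}" by (rule x)
    show "KKT f g i 1 y (yt1 $ i) (l1 $ i)" "KKT f g i 0 y (yt0 $ i) (l0 $ i)"
      using cases[of i] lam_own[of i] lam_other[of i] by (auto simp: yt1_def yt0_def l1_def l0_def)
    show "0 \<le> k1 $ i" "0 \<le> k0 $ i"
      using cases[of i] compensated[of i] by (auto simp: k1_def k0_def)
    show "0 \<le> (\<chi> i. if x $ i = 1 then \<zeta> i else 0) $ i" "0 \<le> (\<chi> i. if x $ i = 1 then 0 else \<zeta> i) $ i"
      using \<zeta>(1)[of i] by simp_all
    show "f i 1 (yt1 $ i) y + k1 $ i - (\<chi> i. if x $ i = 1 then \<zeta> i else 0) $ i - k0 $ i
        + (\<chi> i. if x $ i = 1 then 0 else \<zeta> i) $ i = f i 0 (yt0 $ i) y"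
      using cases[of i] by (auto simp: yt1_def yt0_def k1_def k0_def)
    show "k1 $ i + (\<chi> i. if x $ i = 1 then \<zeta> i else 0) $ i \<le> x $ i * K"
      "k0 $ i + (\<chi> i. if x $ i = 1 then 0 else \<zeta> i) $ i \<le> (1 - x $ i) * K"
      using cases[of i] gap[of i] \<zeta>(2)[of i] K by (auto simp: k1_def k0_def abs_le_iff)
    fix l
    have "\<bar>y $ i $ l - yx i $ l\<bar> \<le> K" using y_box[of i l] yx_box[of i l] K by linarith
    then show "\<bar>y $ i $ l - yt0 $ i $ l\<bar> \<le> x $ i * K" "\<bar>y $ i $ l - yt1 $ i $ l\<bar> \<le> (1 - x $ i) * K"
      using cases[of i] by (auto simp: yt1_def yt0_def)
  qed
  then show ?thesis by blast
qed

lemma NE_imp_P_feas: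
  assumes "A1 f g" "feasible_box g R" "switch_cost_bound f R D" "2 * R \<le> K" "3 * D \<le> K" "0 \<le> D"
    and NE: "NE f g x y"
  shows "\<exists>yt1 yt0 l1 l0 k1 k0. P_feas f g K x y yt1 yt0 l1 l0 k1 k0 0 0"
proof -
  have "\<forall>i. \<exists>yx. is_argmin f g i (1 - x $ i) y yx \<and> f i (x $ i) (y $ i) y \<le> f i (1 - x $ i) yx y"
    using NE unfolding NE_def by blast
  then obtain yx where yx: "\<And>i. is_argmin f g i (1 - x $ i) y (yx i)"
    "\<And>i. f i (x $ i) (y $ i) y \<le> f i (1 - x $ i) (yx i) y"
    by metis
  have "\<exists>yt1 yt0 l1 l0 k1 k0. P_feas f g K x y yt1 yt0 l1 l0 k1 k0
      (\<chi> i. if x $ i = 1 then 0 else 0) (\<chi> i. if x $ i = 1 then 0 else 0)"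
    using NE yx assms(6) unfolding NE_def
    by (intro P_feas_of_responses[OF assms(1-5), where yx = yx and \<zeta> = "\<lambda>_. 0"]) auto
  moreover have "(\<chi> i. if x $ i = 1 then 0 else (0::real)) = 0" by (simp add: vec_eq_iff)
  ultimately show ?thesis by simp
qed

lemma BQE_imp_P_feas:
  assumes "A1 f g" "feasible_box g R" "switch_cost_bound f R D" "2 * R \<le> K" "3 * D \<le> K"
    and BQE: "BQE f g x y \<zeta>"
  shows "\<exists>yt1 yt0 l1 l0 k1 k0 z1 z0. P_feas f g K x y yt1 yt0 l1 l0 k1 k0 z1 z0"
proof -
  have "\<forall>i. \<exists>yx. is_argmin f g i (1 - x $ i) y yx \<and>
      f i (x $ i) (y $ i) y - \<zeta> $ i \<le> f i (1 - x $ i) yx y \<and>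
      (\<forall>\<zeta>'\<ge>0. f i (x $ i) (y $ i) y - \<zeta>' \<le> f i (1 - x $ i) yx y \<longrightarrow> \<zeta> $ i \<le> \<zeta>')"
    using BQE unfolding BQE_def by blast
  then obtain yx where yx: "\<And>i. is_argmin f g i (1 - x $ i) y (yx i)"
    "\<And>i. f i (x $ i) (y $ i) y - \<zeta> $ i \<le> f i (1 - x $ i) (yx i) y"
    "\<And>i \<zeta>'. 0 \<le> \<zeta>' \<Longrightarrow> f i (x $ i) (y $ i) y - \<zeta>' \<le> f i (1 - x $ i) (yx i) y \<Longrightarrow> \<zeta> $ i \<le> \<zeta>'"
    by metis
  have x: "x $ i \<in> {0,1}" and own: "is_argmin f g i (x $ i) y (y $ i)" and "0 \<le> \<zeta> $ i" for i
    using BQE unfolding BQE_def by blast+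
  have "\<zeta> $ i \<le> D" for i
  proof -
    have y_box: "\<forall>l. \<bar>y $ j $ l\<bar> \<le> R" for j
      using assms(2) own[of j] x[of j] unfolding feasible_box_def is_argmin_def by blast
    have yx_box: "\<forall>l. \<bar>yx i $ l\<bar> \<le> R"
      using assms(2) yx(1)[of i] x[of i] unfolding feasible_box_def is_argmin_def by fastforce
    have "\<bar>f i 1 v y - f i 0 v' y\<bar> \<le> D" if "\<forall>l. \<bar>v $ l\<bar> \<le> R" "\<forall>l. \<bar>v' $ l\<bar> \<le> R" for v v'
      using assms(3) y_box that unfolding switch_cost_bound_def by blast
    from this[of "y $ i" "yx i"] this[of "yx i" "y $ i"]
    have "\<bar>f i (x $ i) (y $ i) y - f i (1 - x $ i) (yx i) y\<bar> \<le> D"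
      using x[of i] y_box yx_box by (auto simp: abs_minus_commute[of "f i 0 _ y"])
    moreover have "\<zeta> $ i \<le> max 0 (f i (x $ i) (y $ i) y - f i (1 - x $ i) (yx i) y)"
      by (rule yx(3)) auto
    ultimately show ?thesis by linarith
  qed
  then show ?thesis
    using P_feas_of_responses[OF assms(1-5) x own yx(1), of "\<lambda>i. \<zeta> $ i"] yx(2) \<open>\<And>i. 0 \<le> \<zeta> $ i\<close>
    by blast
qed

lemma P_feas_decrease_compensation1:
  assumes "P_feas f g K x y yt1 yt0 l1 l0 k1 k0 z1 z0" "0 \<le> h" "h \<le> z1 $ i" "h \<le> k1 $ i"
  shows "P_feas f g K x y yt1 yt0 l1 l0 (k1 - h *\<^sub>R axis i 1) k0 (z1 - h *\<^sub>R axis i 1) z0"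
  using assms unfolding P_feas_def
  apply (intro allI)
  subgoal for j by (drule spec[of _ j], cases "j = i") (auto simp: axis_def)
  done

lemma P_feas_decrease_compensation0:
  assumes "P_feas f g K x y yt1 yt0 l1 l0 k1 k0 z1 z0" "0 \<le> h" "h \<le> z0 $ i" "h \<le> k0 $ i"
  shows "P_feas f g K x y yt1 yt0 l1 l0 k1 (k0 - h *\<^sub>R axis i 1) z1 (z0 - h *\<^sub>R axis i 1)"
  using assms unfolding P_feas_def
  apply (intro allI)
  subgoal for j by (drule spec[of _ j], cases "j = i") (auto simp: axis_def)
  done


section \<open>The mixed-integer program\<close>

text \<open>The first summand holds the variables the theorem
  reads off (\<open>x\<close>, \<open>y\<close> and the two compensations). For each branch \<open>\<beta>\<close> (\<open>True\<close> meaning \<open>x\<^sub>i = 1\<close>) and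
  player \<open>i\<close> there are \<open>\<tilde>y\<close>, \<open>\<kappa>\<close>, and for every candidate active set \<open>S\<close> of constraint rows a binary
  selector together with copies of the cost vector, of the multipliers and of the dual value that
  must vanish unless \<open>S\<close> is selected; this linearizes complementarity exactly. Likewise a binary
  selector for every profile \<open>X \<subseteq> I\<close> of ones, with a copy of \<open>y\<close>, linearizes \<open>F(x, y)\<close>, which is
  convex quadratic only for fixed \<open>x\<close>.\<close>

type_synonym ('p, 'm, 'k) mip_var =
  "('p + ('p \<times> 'm) + 'p + 'p) + ((bool \<times> 'p \<times> 'm) + (bool \<times> 'p \<times> 'k set)
   + (bool \<times> 'p \<times> 'k set \<times> 'm) + (bool \<times> 'p \<times> 'k set \<times> 'k) + (bool \<times> 'p \<times> 'k set) + (bool \<times> 'p)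
   + 'p set + ('p set \<times> 'p \<times> 'm))"

abbreviation vx :: "'p \<Rightarrow> ('p, 'm, 'k) mip_var" where "vx i \<equiv> Inl (Inl i)"
abbreviation vy :: "'p \<Rightarrow> 'm \<Rightarrow> ('p, 'm, 'k) mip_var" where "vy i l \<equiv> Inl (Inr (Inl (i, l)))"
abbreviation vz1 :: "'p \<Rightarrow> ('p, 'm, 'k) mip_var" where "vz1 i \<equiv> Inl (Inr (Inr (Inl i)))"
abbreviation vz0 :: "'p \<Rightarrow> ('p, 'm, 'k) mip_var" where "vz0 i \<equiv> Inl (Inr (Inr (Inr i)))"
abbreviation vyt :: "bool \<Rightarrow> 'p \<Rightarrow> 'm \<Rightarrow> ('p, 'm, 'k) mip_var" where
  "vyt \<beta> i l \<equiv> Inr (Inl (\<beta>, i, l))"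
abbreviation vsel :: "bool \<Rightarrow> 'p \<Rightarrow> 'k set \<Rightarrow> ('p, 'm, 'k) mip_var" where
  "vsel \<beta> i S \<equiv> Inr (Inr (Inl (\<beta>, i, S)))"
abbreviation vcost :: "bool \<Rightarrow> 'p \<Rightarrow> 'k set \<Rightarrow> 'm \<Rightarrow> ('p, 'm, 'k) mip_var" where
  "vcost \<beta> i S l \<equiv> Inr (Inr (Inr (Inl (\<beta>, i, S, l))))"
abbreviation vlam :: "bool \<Rightarrow> 'p \<Rightarrow> 'k set \<Rightarrow> 'k \<Rightarrow> ('p, 'm, 'k) mip_var" where
  "vlam \<beta> i S l \<equiv> Inr (Inr (Inr (Inr (Inl (\<beta>, i, S, l)))))"
abbreviation vdual :: "bool \<Rightarrow> 'p \<Rightarrow> 'k set \<Rightarrow> ('p, 'm, 'k) mip_var" where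
  "vdual \<beta> i S \<equiv> Inr (Inr (Inr (Inr (Inr (Inl (\<beta>, i, S))))))"
abbreviation vkappa :: "bool \<Rightarrow> 'p \<Rightarrow> ('p, 'm, 'k) mip_var" where
  "vkappa \<beta> i \<equiv> Inr (Inr (Inr (Inr (Inr (Inr (Inl (\<beta>, i)))))))"
abbreviation vprof :: "'p set \<Rightarrow> ('p, 'm, 'k) mip_var" where
  "vprof X \<equiv> Inr (Inr (Inr (Inr (Inr (Inr (Inr (Inl X)))))))"
abbreviation vcopy :: "'p set \<Rightarrow> 'p \<Rightarrow> 'm \<Rightarrow> ('p, 'm, 'k) mip_var" where
  "vcopy X i l \<equiv> Inr (Inr (Inr (Inr (Inr (Inr (Inr (Inr (X, i, l))))))))"

definition exact_mip_reformulation ::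
  "('p::finite \<Rightarrow> real \<Rightarrow> real^'m::finite \<Rightarrow> (real^'m)^'p \<Rightarrow> real) \<Rightarrow> ('p \<Rightarrow> real \<Rightarrow> real^'m \<Rightarrow> real^'k::finite)
    \<Rightarrow> (real^'p \<Rightarrow> (real^'m)^'p \<Rightarrow> real) \<Rightarrow> ((real^'p) \<times> (real^'p) \<Rightarrow> real) \<Rightarrow> real \<Rightarrow> bool" where
  "exact_mip_reformulation f g F G K \<longleftrightarrow> (\<exists>N Bin R A b Q c d (idx :: 'p + ('p \<times> 'm) + 'p + 'p \<Rightarrow> nat).
       inj idx \<and> (\<forall>v. idx v < N) \<and> Bin \<subseteq> {..<N} \<and> (\<forall>i. idx (Inl i) \<in> Bin) \<and> psd N Q \<and>
       (\<forall>z. mip_feasible N Bin R A b z \<longrightarrow>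
          mip_obj N Q c d z = F (xof idx z) (yof idx z) + G (z1of idx z, z0of idx z)) \<and>
       {(xof idx z, yof idx z, z1of idx z, z0of idx z) | z. mip_feasible N Bin R A b z} =
         {(x, y, z1, z0) | x y z1 z0. \<exists>yt1 yt0 l1 l0 k1 k0. P_feas f g K x y yt1 yt0 l1 l0 k1 k0 z1 z0} \<and>
       (\<forall>x y. NE f g x y \<longleftrightarrow>
          (\<exists>z. mip_feasible N Bin R A b z \<and> xof idx z = x \<and> yof idx z = y \<and>
               z1of idx z = 0 \<and> z0of idx z = 0)) \<and>
       (\<forall>z. mip_feasible N Bin R A b z \<and>
            (\<forall>z'. mip_feasible N Bin R A b z' \<longrightarrow> mip_obj N Q c d z \<le> mip_obj N Q c d z') \<longrightarrow>
            BQE f g (xof idx z) (yof idx z) (z1of idx z + z0of idx z)) \<and>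
       (\<forall>x y \<zeta>. BQE f g x y \<zeta> \<longrightarrow>
          (\<exists>z. mip_feasible N Bin R A b z \<and> xof idx z = x \<and> yof idx z = y)))"

locale game_mip = affine_game f g c0 M rest \<alpha> a A b
  for f :: "'p::finite \<Rightarrow> real \<Rightarrow> real^'m::finite \<Rightarrow> (real^'m)^'p \<Rightarrow> real"
    and g :: "'p \<Rightarrow> real \<Rightarrow> real^'m \<Rightarrow> real^'k::finite"
    and c0 M rest \<alpha> a A b +
  fixes F :: "real^'p \<Rightarrow> (real^'m)^'p \<Rightarrow> real"
    and G :: "(real^'p) \<times> (real^'p) \<Rightarrow> real"
    and K Ry Rc Rt Rg :: real
  assumes A1: "A1 f g" and A2: "A2 F G" and K_nonneg: "0 \<le> K"
    and y_bounded: "feasible_box g Ry"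
    and cost_bounded: "\<And>i Y l. \<forall>j l'. \<bar>Y $ j $ l'\<bar> \<le> Ry + K \<Longrightarrow> \<bar>cost_vec i Y $ l\<bar> \<le> Rc"
    and value_bounded: "\<And>i Y v. \<forall>j l'. \<bar>Y $ j $ l'\<bar> \<le> Ry + K \<Longrightarrow> \<forall>l. \<bar>v $ l\<bar> \<le> Ry \<Longrightarrow>
      \<bar>cost_vec i Y \<bullet> v\<bar> \<le> Rt"
    and slack_bounded: "\<And>i xi v l. xi \<in> {0,1} \<Longrightarrow> v \<in> Kset g i xi \<Longrightarrow> \<bar>g i xi v $ l\<bar> \<le> Rg"

context affine_game
begin

lemma game_mip_exists:
  assumes "A1 f g" "A2 F G" "0 \<le> K" "0 \<le> Ry" "feasible_box g Ry"
  obtains Rc Rt Rg where "game_mip f g c0 M rest \<alpha> a A b F G K Ry Rc Rt Rg"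
proof -
  obtain Rc where Rc: "\<And>i Y l. \<forall>j l'. \<bar>Y $ j $ l'\<bar> \<le> Ry + K \<Longrightarrow> \<bar>cost_vec i Y $ l\<bar> \<le> Rc"
    using cost_vec_bounded by blast
  obtain Rg where Rg: "\<And>i xi v l. xi \<in> {0,1} \<Longrightarrow> \<forall>l'. \<bar>v $ l'\<bar> \<le> Ry \<Longrightarrow> \<bar>g i xi v $ l\<bar> \<le> Rg"
    using g_bounded by blast
  have "game_mip f g c0 M rest \<alpha> a A b F G K Ry Rc ((\<Sum>l\<in>(UNIV::'m set). Rc) * Ry) Rg"
  proof unfold_locales
    show "A1 f g" "A2 F G" "0 \<le> K" "feasible_box g Ry" by (fact assms)+
    show "\<bar>cost_vec i Y $ l\<bar> \<le> Rc" if "\<forall>j l'. \<bar>Y $ j $ l'\<bar> \<le> Ry + K" for i Y l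
      using Rc that .
    show "\<bar>cost_vec i Y \<bullet> v\<bar> \<le> (\<Sum>l\<in>(UNIV::'m set). Rc) * Ry"
      if "\<forall>j l'. \<bar>Y $ j $ l'\<bar> \<le> Ry + K" "\<forall>l. \<bar>v $ l\<bar> \<le> Ry" for i Y v
      by (rule inner_abs_le[OF _ that(2) assms(4)]) (use Rc[OF that(1)] in blast)
    show "\<bar>g i xi v $ l\<bar> \<le> Rg" if "xi \<in> {0,1}" "v \<in> Kset g i xi" for i xi v l
      using Rg[OF that(1)] assms(5) that unfolding feasible_box_def by blast
  qed
  then show thesis by (rule that)
qed

end

context game_mip
begin

definition g_row :: "bool \<Rightarrow> 'p \<Rightarrow> 'k \<Rightarrow> (('p, 'm, 'k) mip_var \<Rightarrow> real) \<Rightarrow> real" where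
  "g_row \<beta> i l u = of_bool \<beta> * a i $ l + (\<Sum>l'\<in>UNIV. A i $ l $ l' * u (vyt \<beta> i l')) - b i $ l"

definition kkt_rows :: "bool \<Rightarrow> 'p \<Rightarrow> (('p, 'm, 'k) mip_var \<Rightarrow> real) \<Rightarrow> bool" where
  "kkt_rows \<beta> i u \<longleftrightarrow>
     (\<forall>l. g_row \<beta> i l u \<le> 0) \<and>
     (\<Sum>S\<in>UNIV. u (vsel \<beta> i S)) = 1 \<and>
     (\<forall>n. (\<Sum>S\<in>UNIV. u (vcost \<beta> i S n))
        = c0 i $ n + (\<Sum>j\<in>UNIV-{i}. \<Sum>n'\<in>UNIV. M i j $ n $ n' * u (vy j n'))) \<and>
     (\<forall>S n. \<bar>u (vcost \<beta> i S n)\<bar> \<le> Rc * u (vsel \<beta> i S)) \<and>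
     (\<forall>S n. u (vcost \<beta> i S n) + (\<Sum>l\<in>UNIV. u (vlam \<beta> i S l) * A i $ l $ n) = 0) \<and>
     (\<forall>S l. 0 \<le> u (vlam \<beta> i S l)) \<and>
     (\<forall>S l. l \<notin> S \<longrightarrow> u (vlam \<beta> i S l) = 0) \<and>
     (\<forall>S l. l \<in> S \<longrightarrow> - g_row \<beta> i l u \<le> Rg * (1 - u (vsel \<beta> i S))) \<and>
     (\<forall>S. u (vdual \<beta> i S) = (\<Sum>l\<in>UNIV. u (vlam \<beta> i S l) * (b i $ l - of_bool \<beta> * a i $ l))) \<and>
     (\<forall>S. \<bar>u (vdual \<beta> i S)\<bar> \<le> Rt * u (vsel \<beta> i S))"

definition coupling_rows :: "'p \<Rightarrow> (('p, 'm, 'k) mip_var \<Rightarrow> real) \<Rightarrow> bool" where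
  "coupling_rows i u \<longleftrightarrow>
     (\<forall>\<beta>. 0 \<le> u (vkappa \<beta> i)) \<and> 0 \<le> u (vz1 i) \<and> 0 \<le> u (vz0 i) \<and>
     \<alpha> i - (\<Sum>S\<in>UNIV. u (vdual True i S)) + (\<Sum>S\<in>UNIV. u (vdual False i S))
       + u (vkappa True i) - u (vz1 i) - u (vkappa False i) + u (vz0 i) = 0 \<and>
     u (vkappa True i) + u (vz1 i) \<le> u (vx i) * K \<and>
     u (vkappa False i) + u (vz0 i) \<le> (1 - u (vx i)) * K \<and>
     (\<forall>n. \<bar>u (vy i n) - u (vyt False i n)\<bar> \<le> u (vx i) * K) \<and>
     (\<forall>n. \<bar>u (vy i n) - u (vyt True i n)\<bar> \<le> (1 - u (vx i)) * K)"

definition profile_rows :: "(('p, 'm, 'k) mip_var \<Rightarrow> real) \<Rightarrow> bool" where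
  "profile_rows u \<longleftrightarrow>
     (\<Sum>X\<in>UNIV. u (vprof X)) = 1 \<and>
     (\<forall>i. u (vx i) = (\<Sum>X\<in>{X. i \<in> X}. u (vprof X))) \<and>
     (\<forall>i n. u (vy i n) = (\<Sum>X\<in>UNIV. u (vcopy X i n))) \<and>
     (\<forall>X i n. \<bar>u (vcopy X i n)\<bar> \<le> (Ry + K) * u (vprof X))"

definition mip_rows :: "(('p, 'm, 'k) mip_var \<Rightarrow> real) \<Rightarrow> bool" where
  "mip_rows u \<longleftrightarrow> (\<forall>\<beta> i. kkt_rows \<beta> i u) \<and> (\<forall>i. coupling_rows i u) \<and> profile_rows u"

definition binary_vars :: "('p, 'm, 'k) mip_var set" where
  "binary_vars = range vx \<union> {vsel \<beta> i S | \<beta> i S. True} \<union> range vprof"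

definition mip_feas :: "(('p, 'm, 'k) mip_var \<Rightarrow> real) \<Rightarrow> bool" where
  "mip_feas u \<longleftrightarrow> mip_rows u \<and> (\<forall>v\<in>binary_vars. u v \<in> {0,1})"

lemma kkt_rowsD:
  assumes "kkt_rows \<beta> i u"
  shows "g_row \<beta> i l u \<le> 0" "(\<Sum>S\<in>UNIV. u (vsel \<beta> i S)) = 1"
    "(\<Sum>S\<in>UNIV. u (vcost \<beta> i S n)) = c0 i $ n + (\<Sum>j\<in>UNIV-{i}. \<Sum>n'\<in>UNIV. M i j $ n $ n' * u (vy j n'))"
    "\<bar>u (vcost \<beta> i S n)\<bar> \<le> Rc * u (vsel \<beta> i S)"
    "u (vcost \<beta> i S n) + (\<Sum>l\<in>UNIV. u (vlam \<beta> i S l) * A i $ l $ n) = 0"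
    "0 \<le> u (vlam \<beta> i S l)" "l \<notin> S \<Longrightarrow> u (vlam \<beta> i S l) = 0"
    "l \<in> S \<Longrightarrow> - g_row \<beta> i l u \<le> Rg * (1 - u (vsel \<beta> i S))"
    "u (vdual \<beta> i S) = (\<Sum>l\<in>UNIV. u (vlam \<beta> i S l) * (b i $ l - of_bool \<beta> * a i $ l))"
    "\<bar>u (vdual \<beta> i S)\<bar> \<le> Rt * u (vsel \<beta> i S)"
proof -
  note R = assms[unfolded kkt_rows_def]
  show "\<bar>u (vdual \<beta> i S)\<bar> \<le> Rt * u (vsel \<beta> i S)"
    using R by blast
qed (use assms in \<open>simp_all add: kkt_rows_def\<close>)

lemma coupling_rowsD:
  assumes "coupling_rows i u"
  shows "0 \<le> u (vkappa \<beta> i)" "0 \<le> u (vz1 i)" "0 \<le> u (vz0 i)"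
    "\<alpha> i - (\<Sum>S\<in>UNIV. u (vdual True i S)) + (\<Sum>S\<in>UNIV. u (vdual False i S))
       + u (vkappa True i) - u (vz1 i) - u (vkappa False i) + u (vz0 i) = 0"
    "u (vkappa True i) + u (vz1 i) \<le> u (vx i) * K"
    "u (vkappa False i) + u (vz0 i) \<le> (1 - u (vx i)) * K"
    "\<bar>u (vy i n) - u (vyt False i n)\<bar> \<le> u (vx i) * K"
    "\<bar>u (vy i n) - u (vyt True i n)\<bar> \<le> (1 - u (vx i)) * K"
  using assms unfolding coupling_rows_def by blast+

lemma profile_rowsD:
  assumes "profile_rows u"
  shows "(\<Sum>X\<in>UNIV. u (vprof X)) = 1" "u (vx i) = (\<Sum>X\<in>{X. i \<in> X}. u (vprof X))"
    "u (vy i n) = (\<Sum>X\<in>UNIV. u (vcopy X i n))" "\<bar>u (vcopy X i n)\<bar> \<le> (Ry + K) * u (vprof X)"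
  using assms unfolding profile_rows_def by blast+

lemma lin_ineq_definable_mip_rows: "lin_ineq_definable mip_rows"
  unfolding mip_rows_def[abs_def] kkt_rows_def coupling_rows_def profile_rows_def g_row_def
  by (intro lin_ineq_definable_conj lin_ineq_definable_all lin_ineq_definable_imp lin_ineq_definable_eq
      lin_ineq_definable_le lin_ineq_definable_abs_le affine_fun_intros finite)


definition proj_x :: "(('p, 'm, 'k) mip_var \<Rightarrow> real) \<Rightarrow> real^'p" where
  "proj_x u = (\<chi> i. u (vx i))"
definition proj_y :: "(('p, 'm, 'k) mip_var \<Rightarrow> real) \<Rightarrow> (real^'m)^'p" where
  "proj_y u = (\<chi> i l. u (vy i l))"
definition proj_z1 :: "(('p, 'm, 'k) mip_var \<Rightarrow> real) \<Rightarrow> real^'p" where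
  "proj_z1 u = (\<chi> i. u (vz1 i))"
definition proj_z0 :: "(('p, 'm, 'k) mip_var \<Rightarrow> real) \<Rightarrow> real^'p" where
  "proj_z0 u = (\<chi> i. u (vz0 i))"
definition proj_yt :: "bool \<Rightarrow> (('p, 'm, 'k) mip_var \<Rightarrow> real) \<Rightarrow> (real^'m)^'p" where
  "proj_yt \<beta> u = (\<chi> i l. u (vyt \<beta> i l))"
definition proj_kappa :: "bool \<Rightarrow> (('p, 'm, 'k) mip_var \<Rightarrow> real) \<Rightarrow> real^'p" where
  "proj_kappa \<beta> u = (\<chi> i. u (vkappa \<beta> i))"
definition active_set :: "(('p, 'm, 'k) mip_var \<Rightarrow> real) \<Rightarrow> bool \<Rightarrow> 'p \<Rightarrow> 'k set" where
  "active_set u \<beta> i = (SOME S. u (vsel \<beta> i S) = 1)"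
definition proj_lam :: "bool \<Rightarrow> (('p, 'm, 'k) mip_var \<Rightarrow> real) \<Rightarrow> (real^'k)^'p" where
  "proj_lam \<beta> u = (\<chi> i l. u (vlam \<beta> i (active_set u \<beta> i) l))"

lemma mip_feas_active_set:
  assumes "mip_feas u"
  shows "u (vsel \<beta> i (active_set u \<beta> i)) = 1" "S \<noteq> active_set u \<beta> i \<Longrightarrow> u (vsel \<beta> i S) = 0"
proof -
  have "\<forall>S. u (vsel \<beta> i S) \<in> {0,1}" "(\<Sum>S\<in>UNIV. u (vsel \<beta> i S)) = 1"
    using assms unfolding mip_feas_def mip_rows_def kkt_rows_def binary_vars_def by auto
  then obtain S0 where S0: "u (vsel \<beta> i S0) = 1" "\<And>S. S \<noteq> S0 \<Longrightarrow> u (vsel \<beta> i S) = 0"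
    using binary_sum_eq_1_imp_indicator[of UNIV "\<lambda>S. u (vsel \<beta> i S)"] by auto
  then have "active_set u \<beta> i = S0"
    unfolding active_set_def by (metis (mono_tags, lifting) someI zero_neq_one)
  with S0 show "u (vsel \<beta> i (active_set u \<beta> i)) = 1" "S \<noteq> active_set u \<beta> i \<Longrightarrow> u (vsel \<beta> i S) = 0"
    by auto
qed

lemma g_row_eq: "g_row \<beta> i l u = g i (of_bool \<beta>) (proj_yt \<beta> u $ i) $ l"
  unfolding g_row_def g_component proj_yt_def by simp

lemma mip_feas_KKT:
  assumes feas: "mip_feas u"
  shows "KKT f g i (of_bool \<beta>) (proj_y u) (proj_yt \<beta> u $ i) (proj_lam \<beta> u $ i)"
proof -
  let ?S = "active_set u \<beta> i"
  have rows: "kkt_rows \<beta> i u" using feas unfolding mip_feas_def mip_rows_def by blast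
  note R = kkt_rowsD[OF rows] and sel = mip_feas_active_set[OF feas, where \<beta> = \<beta> and i = i]
  have "u (vcost \<beta> i S l) = 0" if "S \<noteq> ?S" for S l
    using R(4)[where S = S and n = l] sel(2)[OF that] by simp
  then have "(\<Sum>S\<in>UNIV. u (vcost \<beta> i S l)) = u (vcost \<beta> i ?S l)" for l
    by (intro sum.mono_neutral_cong_right[where S = "{?S}", simplified]) auto
  then have cost: "cost_vec i (proj_y u) $ l = u (vcost \<beta> i ?S l)" for l
    using R(3)[where n = l] unfolding cost_vec_component proj_y_def by simp
  have "cost_vec i (proj_y u) + (\<Sum>l\<in>UNIV. proj_lam \<beta> u $ i $ l *\<^sub>R A i $ l) = 0"
    using R(5) unfolding vec_eq_iff by (simp add: cost proj_lam_def)
  moreover have feasible: "g i (of_bool \<beta>) (proj_yt \<beta> u $ i) $ l \<le> 0" for l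
    using R(1) unfolding g_row_eq .
  moreover have "proj_lam \<beta> u $ i $ l * g i (of_bool \<beta>) (proj_yt \<beta> u $ i) $ l = 0" for l
  proof (cases "l \<in> ?S")
    case True
    then show ?thesis using R(8)[OF True] sel(1) feasible[of l] unfolding g_row_eq by simp
  next
    case False
    then show ?thesis using R(7) unfolding proj_lam_def by simp
  qed
  moreover have "0 \<le> proj_lam \<beta> u $ i $ l" for l
    using R(6) unfolding proj_lam_def by simp
  ultimately show ?thesis unfolding KKT_iff by blast
qed

lemma mip_feas_dual_value:
  assumes feas: "mip_feas u"
  shows "(\<Sum>S\<in>UNIV. u (vdual \<beta> i S)) = - (cost_vec i (proj_y u) \<bullet> (proj_yt \<beta> u $ i))"
proof -
  let ?S = "active_set u \<beta> i"
  have rows: "kkt_rows \<beta> i u" using feas unfolding mip_feas_def mip_rows_def by blast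
  note R = kkt_rowsD[OF rows] and sel = mip_feas_active_set[OF feas, where \<beta> = \<beta> and i = i]
  have "u (vdual \<beta> i S) = 0" if "S \<noteq> ?S" for S
    using R(10)[where S = S] sel(2)[OF that] by simp
  then have "(\<Sum>S\<in>UNIV. u (vdual \<beta> i S)) = u (vdual \<beta> i ?S)"
    by (intro sum.mono_neutral_cong_right[where S = "{?S}", simplified]) auto
  also have "\<dots> = (\<Sum>l\<in>UNIV. proj_lam \<beta> u $ i $ l * (b i $ l - of_bool \<beta> * a i $ l))"
    using R(9) unfolding proj_lam_def by simp
  also have "\<dots> = - (cost_vec i (proj_y u) \<bullet> (proj_yt \<beta> u $ i))"
    using KKT_cost_value[OF mip_feas_KKT[OF feas]] by simp
  finally show ?thesis .
qed

lemma mip_feas_imp_P_feas: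
  assumes feas: "mip_feas u"
  shows "P_feas f g K (proj_x u) (proj_y u) (proj_yt True u) (proj_yt False u)
    (proj_lam True u) (proj_lam False u) (proj_kappa True u) (proj_kappa False u) (proj_z1 u) (proj_z0 u)"
proof (rule P_feasI)
  fix i
  have rows: "coupling_rows i u" using feas unfolding mip_feas_def mip_rows_def by blast
  note R = coupling_rowsD[OF rows]
  have "f i 1 (proj_yt True u $ i) (proj_y u) - f i 0 (proj_yt False u $ i) (proj_y u)
      = \<alpha> i - (\<Sum>S\<in>UNIV. u (vdual True i S)) + (\<Sum>S\<in>UNIV. u (vdual False i S))"
    unfolding f_switch mip_feas_dual_value[OF feas] by simp
  then show "f i 1 (proj_yt True u $ i) (proj_y u) + proj_kappa True u $ i - proj_z1 u $ i
      - proj_kappa False u $ i + proj_z0 u $ i = f i 0 (proj_yt False u $ i) (proj_y u)"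
    using R(4) unfolding proj_kappa_def proj_z1_def proj_z0_def by simp
  show "proj_x u $ i \<in> {0,1}"
    using feas unfolding mip_feas_def binary_vars_def proj_x_def by simp
  show "KKT f g i 1 (proj_y u) (proj_yt True u $ i) (proj_lam True u $ i)"
    "KKT f g i 0 (proj_y u) (proj_yt False u $ i) (proj_lam False u $ i)"
    using mip_feas_KKT[OF feas, of i True] mip_feas_KKT[OF feas, of i False] by simp_all
qed (use coupling_rowsD feas in \<open>simp_all add: mip_feas_def mip_rows_def proj_x_def proj_y_def
  proj_yt_def proj_kappa_def proj_z1_def proj_z0_def\<close>)

definition indicator_vec :: "'p set \<Rightarrow> real^'p" where
  "indicator_vec X = (\<chi> i. if i \<in> X then 1 else 0)"

definition proj_copy :: "'p set \<Rightarrow> (('p, 'm, 'k) mip_var \<Rightarrow> real) \<Rightarrow> (real^'m)^'p" where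
  "proj_copy X u = (\<chi> i n. u (vcopy X i n))"

text \<open>On feasible points the copy of \<open>y\<close> vanishes for every profile \<open>X\<close> but the selected one, and
  the correction \<open>F(X, 0) (w\<^sub>X - 1)\<close> cancels the constant term \<open>F(X, 0)\<close> of those profiles.\<close>

definition mip_objective :: "(('p, 'm, 'k) mip_var \<Rightarrow> real) \<Rightarrow> real" where
  "mip_objective u = (\<Sum>X\<in>UNIV. F (indicator_vec X) (proj_copy X u)
     + F (indicator_vec X) 0 * (u (vprof X) - 1)) + G (proj_z1 u, proj_z0 u)"

lemma convex_quadratic_mip_objective: "convex_quadratic mip_objective"
proof -
  have F: "cq_or_lin (F (indicator_vec X))" for X
    using A2 unfolding A2_def indicator_vec_def by auto
  have "convex_quadratic (\<lambda>u. F (indicator_vec X) (proj_copy X u))" for X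
    unfolding proj_copy_def by (rule convex_quadratic_comp_linear[OF F vec_of_coords2_eq_sum])
  then have summand: "convex_quadratic (\<lambda>u. F (indicator_vec X) (proj_copy X u)
      + F (indicator_vec X) 0 * (u (vprof X) - 1))" for X
    by (rule convex_quadratic_add[OF _ convex_quadratic_affine]) (intro affine_fun_intros)
  have z: "(proj_z1 u, proj_z0 u) = (\<Sum>v\<in>UNIV. u v *\<^sub>R
      ((\<chi> i. if v = vz1 i then 1 else 0), (\<chi> i. if v = vz0 i then 1 else 0)))" for u
    using vec_of_coords_eq_sum[of u vz1] vec_of_coords_eq_sum[of u vz0]
    unfolding proj_z1_def proj_z0_def by (simp add: prod_eq_iff fst_sum snd_sum)
  have "cq_or_lin G" using A2 unfolding A2_def by blast
  from convex_quadratic_comp_linear[OF this z]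
  have "convex_quadratic (\<lambda>u. G (proj_z1 u, proj_z0 u))" .
  moreover have "convex_quadratic (\<lambda>u. \<Sum>X\<in>UNIV. F (indicator_vec X) (proj_copy X u)
      + F (indicator_vec X) 0 * (u (vprof X) - 1))"
    by (rule convex_quadratic_sum) (simp_all add: summand)
  ultimately show ?thesis
    unfolding mip_objective_def[abs_def] by (rule convex_quadratic_add[rotated])
qed

lemma mip_feas_objective:
  assumes feas: "mip_feas u"
  shows "mip_objective u = F (proj_x u) (proj_y u) + G (proj_z1 u, proj_z0 u)"
proof -
  have rows: "profile_rows u" using feas unfolding mip_feas_def mip_rows_def by blast
  note R = profile_rowsD[OF rows]
  have "\<forall>X. u (vprof X) \<in> {0,1}" using feas unfolding mip_feas_def binary_vars_def by auto
  then obtain X0 where X0: "u (vprof X0) = 1" "\<And>X. X \<noteq> X0 \<Longrightarrow> u (vprof X) = 0"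
    using binary_sum_eq_1_imp_indicator[of UNIV "\<lambda>X. u (vprof X)"] R(1) by auto
  have copy0: "u (vcopy X i n) = 0" if "X \<noteq> X0" for X i n
    using R(4)[of X i n] X0(2)[OF that] by simp
  have "(\<Sum>X\<in>UNIV. u (vcopy X i n)) = u (vcopy X0 i n)" for i n
    by (rule sum.mono_neutral_cong_right[where S = "{X0}", simplified]) (auto simp: copy0)
  then have "u (vy i n) = u (vcopy X0 i n)" for i n using R(3) by simp
  then have y: "proj_copy X0 u = proj_y u" by (simp add: proj_copy_def proj_y_def vec_eq_iff)
  have prof: "u (vprof X) = (if X = X0 then 1 else 0)" for X using X0 by auto
  have "u (vx i) = (\<Sum>X\<in>{X. i \<in> X}. if X = X0 then 1 else 0)" for i
    using R(2)[of i] by (simp only: prof)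
  then have x: "proj_x u = indicator_vec X0" by (simp add: proj_x_def indicator_vec_def vec_eq_iff)
  have "proj_copy X u = 0" if "X \<noteq> X0" for X
    using copy0[OF that] by (simp add: proj_copy_def vec_eq_iff)
  then have "(\<Sum>X\<in>UNIV. F (indicator_vec X) (proj_copy X u) + F (indicator_vec X) 0 * (u (vprof X) - 1))
      = F (indicator_vec X0) (proj_copy X0 u) + F (indicator_vec X0) 0 * (u (vprof X0) - 1)"
    by (intro sum.mono_neutral_cong_right[where S = "{X0}", simplified]) (simp_all add: prof)
  then show ?thesis unfolding mip_objective_def x y X0(1) by simp
qed

definition dual_value :: "bool \<Rightarrow> 'p \<Rightarrow> real^'k \<Rightarrow> real" where
  "dual_value \<beta> i lam = (\<Sum>l\<in>UNIV. lam $ l * (b i $ l - of_bool \<beta> * a i $ l))"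

text \<open>The selected active set is the support of the multiplier, and the selected profile is the set
  of players with \<open>x\<^sub>i = 1\<close>.\<close>

definition lift_point :: "real^'p \<Rightarrow> (real^'m)^'p \<Rightarrow> (bool \<Rightarrow> (real^'m)^'p) \<Rightarrow> (bool \<Rightarrow> (real^'k)^'p)
    \<Rightarrow> (bool \<Rightarrow> real^'p) \<Rightarrow> real^'p \<Rightarrow> real^'p \<Rightarrow> ('p, 'm, 'k) mip_var \<Rightarrow> real" where
  "lift_point x y yt lam kappa z1 z0 =
     case_sum (case_sum (\<lambda>i. x $ i) (case_sum (\<lambda>(i, n). y $ i $ n) (case_sum (\<lambda>i. z1 $ i) (\<lambda>i. z0 $ i))))
     (case_sum (\<lambda>(\<beta>, i, n). yt \<beta> $ i $ n)
     (case_sum (\<lambda>(\<beta>, i, S). of_bool (S = {l. lam \<beta> $ i $ l \<noteq> 0}))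
     (case_sum (\<lambda>(\<beta>, i, S, n). if S = {l. lam \<beta> $ i $ l \<noteq> 0} then cost_vec i y $ n else 0)
     (case_sum (\<lambda>(\<beta>, i, S, l). if S = {l. lam \<beta> $ i $ l \<noteq> 0} then lam \<beta> $ i $ l else 0)
     (case_sum (\<lambda>(\<beta>, i, S). if S = {l. lam \<beta> $ i $ l \<noteq> 0} then dual_value \<beta> i (lam \<beta> $ i) else 0)
     (case_sum (\<lambda>(\<beta>, i). kappa \<beta> $ i)
     (case_sum (\<lambda>X. of_bool (X = {i. x $ i = 1}))
     (\<lambda>(X, i, n). if X = {i. x $ i = 1} then y $ i $ n else 0))))))))"

lemma lift_point_apply:
  fixes x y yt lam kappa z1 z0
  defines "u \<equiv> lift_point x y yt lam kappa z1 z0"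
  shows "u (vx i) = x $ i" "u (vy i n) = y $ i $ n" "u (vz1 i) = z1 $ i" "u (vz0 i) = z0 $ i"
    "u (vyt \<beta> i n) = yt \<beta> $ i $ n"
    "u (vsel \<beta> i S) = of_bool (S = {l. lam \<beta> $ i $ l \<noteq> 0})"
    "u (vcost \<beta> i S n) = (if S = {l. lam \<beta> $ i $ l \<noteq> 0} then cost_vec i y $ n else 0)"
    "u (vlam \<beta> i S l) = (if S = {l. lam \<beta> $ i $ l \<noteq> 0} then lam \<beta> $ i $ l else 0)"
    "u (vdual \<beta> i S) = (if S = {l. lam \<beta> $ i $ l \<noteq> 0} then dual_value \<beta> i (lam \<beta> $ i) else 0)"
    "u (vkappa \<beta> i) = kappa \<beta> $ i"
    "u (vprof X) = of_bool (X = {i. x $ i = 1})"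
    "u (vcopy X i n) = (if X = {i. x $ i = 1} then y $ i $ n else 0)"
  unfolding u_def lift_point_def by simp_all

lemma lift_point_kkt_rows:
  assumes KKT: "KKT f g i (of_bool \<beta>) y (yt \<beta> $ i) (lam \<beta> $ i)"
    and y: "\<forall>j n. \<bar>y $ j $ n\<bar> \<le> Ry + K"
  shows "kkt_rows \<beta> i (lift_point x y yt lam kappa z1 z0)"
proof -
  let ?u = "lift_point x y yt lam kappa z1 z0" and ?S = "{l. lam \<beta> $ i $ l \<noteq> 0}"
  note K = KKT[unfolded KKT_iff]
  have g_row: "g_row \<beta> i l ?u = g i (of_bool \<beta>) (yt \<beta> $ i) $ l" for l
    unfolding g_row_def g_component lift_point_apply by simp
  have feasible: "yt \<beta> $ i \<in> Kset g i (of_bool \<beta>)" using K unfolding Kset_def by blast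
  have yt: "\<forall>n. \<bar>yt \<beta> $ i $ n\<bar> \<le> Ry"
    using y_bounded feasible unfolding feasible_box_def by (cases \<beta>) auto
  have stationary: "cost_vec i y $ n + (\<Sum>l\<in>UNIV. lam \<beta> $ i $ l * A i $ l $ n) = 0" for n
    using K unfolding vec_eq_iff by (auto simp: mult.commute)
  have active: "g i (of_bool \<beta>) (yt \<beta> $ i) $ l = 0" if "l \<in> ?S" for l
    using K that by auto
  have slack: "\<bar>g i (of_bool \<beta>) (yt \<beta> $ i) $ l\<bar> \<le> Rg" for l
    using slack_bounded feasible by (cases \<beta>) auto
  have "dual_value \<beta> i (lam \<beta> $ i) = - (cost_vec i y \<bullet> yt \<beta> $ i)"
    using KKT_cost_value[OF KKT] unfolding dual_value_def by simp
  then have dual_bound: "\<bar>dual_value \<beta> i (lam \<beta> $ i)\<bar> \<le> Rt"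
    using value_bounded[OF y yt, of i] by simp
  show ?thesis unfolding kkt_rows_def g_row lift_point_apply
    using K stationary active slack dual_bound cost_bounded[OF y, of i] cost_vec_component[of i y]
    by (auto simp: dual_value_def sum.If_cases abs_le_iff)
qed

lemma lift_point_coupling_rows:
  assumes P: "P_feas f g K x y (yt True) (yt False) (lam True) (lam False) (kappa True) (kappa False) z1 z0"
  shows "coupling_rows i (lift_point x y yt lam kappa z1 z0)"
proof -
  let ?u = "lift_point x y yt lam kappa z1 z0"
  note D = P_feasD[OF P, of i]
  have "(\<Sum>S\<in>UNIV. ?u (vdual \<beta> i S)) = - (cost_vec i y \<bullet> yt \<beta> $ i)" for \<beta>
  proof -
    have "KKT f g i (of_bool \<beta>) y (yt \<beta> $ i) (lam \<beta> $ i)" using D(2,3) by (cases \<beta>) simp_all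
    then show ?thesis unfolding lift_point_apply using KKT_cost_value by (simp add: dual_value_def)
  qed
  then have "\<alpha> i - (\<Sum>S\<in>UNIV. ?u (vdual True i S)) + (\<Sum>S\<in>UNIV. ?u (vdual False i S))
      = f i 1 (yt True $ i) y - f i 0 (yt False $ i) y"
    unfolding f_switch by simp
  moreover have "0 \<le> kappa \<beta> $ i" for \<beta> using D(4,5) by (cases \<beta>) simp_all
  moreover have "\<bar>y $ i $ n - yt False $ i $ n\<bar> \<le> x $ i * K"
    "\<bar>y $ i $ n - yt True $ i $ n\<bar> \<le> (1 - x $ i) * K" for n
    using P_feasD(11-14)[OF P, where i = i and l = n] by (simp_all add: abs_le_iff)
  ultimately show ?thesis
    unfolding coupling_rows_def lift_point_apply using D by auto
qed

lemma lift_point_profile_rows: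
  assumes x: "\<And>i. x $ i \<in> {0,1}" and y: "\<forall>j n. \<bar>y $ j $ n\<bar> \<le> Ry + K"
  shows "profile_rows (lift_point x y yt lam kappa z1 z0)"
proof -
  have "x $ i = (\<Sum>X\<in>{X. i \<in> X}. of_bool (X = {i. x $ i = 1}))" for i
    using x[of i] by auto
  then show ?thesis
    unfolding profile_rows_def lift_point_apply using y by (auto simp: of_bool_def)
qed

lemma P_feas_y_bounded:
  assumes P: "P_feas f g K x y yt1 yt0 l1 l0 k1 k0 z1 z0"
  shows "\<bar>y $ i $ n\<bar> \<le> Ry + K"
proof -
  have "yt0 $ i \<in> Kset g i 0" using P_feasD(3)[OF P, of i] unfolding KKT_iff Kset_def by blast
  then have "\<bar>yt0 $ i $ n\<bar> \<le> Ry" using y_bounded unfolding feasible_box_def by auto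
  moreover have "0 \<le> x $ i * K" "x $ i * K \<le> K" using P_feasD(1)[OF P, of i] K_nonneg by auto
  ultimately show ?thesis using P_feasD(11,12)[OF P, where i = i and l = n] by linarith
qed

lemma P_feas_imp_mip_feas:
  assumes P: "P_feas f g K x y yt1 yt0 l1 l0 k1 k0 z1 z0"
  obtains u where "mip_feas u" "proj_x u = x" "proj_y u = y" "proj_z1 u = z1" "proj_z0 u = z0"
proof -
  define u where "u = lift_point x y (\<lambda>\<beta>. if \<beta> then yt1 else yt0) (\<lambda>\<beta>. if \<beta> then l1 else l0)
    (\<lambda>\<beta>. if \<beta> then k1 else k0) z1 z0"
  have x: "x $ i \<in> {0,1}" for i using P_feasD(1)[OF P] .
  have y: "\<forall>j n. \<bar>y $ j $ n\<bar> \<le> Ry + K" using P_feas_y_bounded[OF P] by blast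
  have "kkt_rows \<beta> i u" for \<beta> i
    using P_feasD(2,3)[OF P, of i] unfolding u_def
    by (intro lift_point_kkt_rows[OF _ y]) (cases \<beta>, simp_all)
  moreover have "coupling_rows i u" for i
    unfolding u_def using P by (intro lift_point_coupling_rows) simp
  moreover have "profile_rows u" unfolding u_def using x y by (rule lift_point_profile_rows)
  moreover have "\<forall>v\<in>binary_vars. u v \<in> {0,1}"
    unfolding binary_vars_def u_def using x by (fastforce simp: lift_point_apply)
  ultimately have "mip_feas u" unfolding mip_feas_def mip_rows_def by blast
  moreover have "proj_x u = x" "proj_y u = y" "proj_z1 u = z1" "proj_z0 u = z0"
    unfolding u_def proj_x_def proj_y_def proj_z1_def proj_z0_def lift_point_apply by (simp_all add: vec_eq_iff)
  ultimately show thesis by (rule that)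
qed

lemma optimal_mip_G_le:
  assumes feas: "mip_feas u" and opt: "\<And>u'. mip_feas u' \<Longrightarrow> mip_objective u \<le> mip_objective u'"
    and P: "P_feas f g K (proj_x u) (proj_y u) yt1 yt0 l1 l0 k1 k0 z1 z0"
  shows "G (proj_z1 u, proj_z0 u) \<le> G (z1, z0)"
proof -
  obtain u' where "mip_feas u'" "proj_x u' = proj_x u" "proj_y u' = proj_y u" "proj_z1 u' = z1" "proj_z0 u' = z0"
    using P_feas_imp_mip_feas[OF P] by blast
  then show ?thesis using opt[of u'] mip_feas_objective[OF feas] mip_feas_objective[of u'] by simp
qed

text \<open>Since \<open>G\<close> strictly increases in every compensation, an optimal point cannot have both
  \<open>\<zeta>\<^sub>i\<close> and \<open>\<kappa>\<^sub>i\<close> positive: lowering both by the same amount keeps (P) feasible.\<close>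

lemma optimal_compensation_complementary:
  assumes feas: "mip_feas u" and opt: "\<And>u'. mip_feas u' \<Longrightarrow> mip_objective u \<le> mip_objective u'"
  shows "(proj_z1 u $ i = 0 \<or> proj_kappa True u $ i = 0) \<and> (proj_z0 u $ i = 0 \<or> proj_kappa False u $ i = 0)"
proof -
  let ?z1 = "proj_z1 u" and ?z0 = "proj_z0 u" and ?k1 = "proj_kappa True u" and ?k0 = "proj_kappa False u"
  note P = mip_feas_imp_P_feas[OF feas]
  have D: "\<exists>D>0. ((\<lambda>t. G (?z1 + t *\<^sub>R axis i 1, ?z0)) has_real_derivative D) (at 0)"
    "\<exists>D>0. ((\<lambda>t. G (?z1, ?z0 + t *\<^sub>R axis i 1)) has_real_derivative D) (at 0)"
    using A2 P_feasD(6,7)[OF P] unfolding A2_def by blast+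
  have "\<not> (0 < min (?z1 $ i) (?k1 $ i))"
  proof
    assume "0 < min (?z1 $ i) (?k1 $ i)"
    with D(1) obtain h where "0 < h" "h \<le> min (?z1 $ i) (?k1 $ i)"
      "G (?z1 + (- h) *\<^sub>R axis i 1, ?z0) < G (?z1 + 0 *\<^sub>R axis i 1, ?z0)"
      using has_real_derivative_pos_imp_less_left by blast
    with optimal_mip_G_le[OF feas opt P_feas_decrease_compensation1[OF P, of h i]] show False by simp
  qed
  moreover have "\<not> (0 < min (?z0 $ i) (?k0 $ i))"
  proof
    assume "0 < min (?z0 $ i) (?k0 $ i)"
    with D(2) obtain h where "0 < h" "h \<le> min (?z0 $ i) (?k0 $ i)"
      "G (?z1, ?z0 + (- h) *\<^sub>R axis i 1) < G (?z1, ?z0 + 0 *\<^sub>R axis i 1)"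
      using has_real_derivative_pos_imp_less_left by blast
    with optimal_mip_G_le[OF feas opt P_feas_decrease_compensation0[OF P, of h i]] show False by simp
  qed
  ultimately show ?thesis using P_feasD(4-7)[OF P, of i] by linarith
qed

lemma optimal_imp_BQE:
  assumes "mip_feas u" "\<And>u'. mip_feas u' \<Longrightarrow> mip_objective u \<le> mip_objective u'"
  shows "BQE f g (proj_x u) (proj_y u) (proj_z1 u + proj_z0 u)"
  using P_feas_complementary_imp_BQE[OF A1 mip_feas_imp_P_feas optimal_compensation_complementary]
    assms by blast

lemma mip_feas_projections_iff:
  "(\<exists>u. mip_feas u \<and> proj_x u = x \<and> proj_y u = y \<and> proj_z1 u = z1 \<and> proj_z0 u = z0) \<longleftrightarrow>
   (\<exists>yt1 yt0 l1 l0 k1 k0. P_feas f g K x y yt1 yt0 l1 l0 k1 k0 z1 z0)"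
proof
  assume "\<exists>u. mip_feas u \<and> proj_x u = x \<and> proj_y u = y \<and> proj_z1 u = z1 \<and> proj_z0 u = z0"
  then show "\<exists>yt1 yt0 l1 l0 k1 k0. P_feas f g K x y yt1 yt0 l1 l0 k1 k0 z1 z0"
    using mip_feas_imp_P_feas by blast
next
  assume "\<exists>yt1 yt0 l1 l0 k1 k0. P_feas f g K x y yt1 yt0 l1 l0 k1 k0 z1 z0"
  then show "\<exists>u. mip_feas u \<and> proj_x u = x \<and> proj_y u = y \<and> proj_z1 u = z1 \<and> proj_z0 u = z0"
    using P_feas_imp_mip_feas by metis
qed

lemma mip_encoding:
  obtains N Bin R A' b' Q c d and e :: "('p, 'm, 'k) mip_var \<Rightarrow> nat"
  where "inj e" "\<And>v. e v < N" "Bin = e ` binary_vars" "psd N Q"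
    "\<And>z. mip_feasible N Bin R A' b' z \<Longrightarrow> mip_feas (z \<circ> e)"
    "\<And>u. mip_feas u \<Longrightarrow> \<exists>z. mip_feasible N Bin R A' b' z \<and> z \<circ> e = u"
    "\<And>z. mip_obj N Q c d z = mip_objective (z \<circ> e)"
proof (rule finite_program_as_mip[OF lin_ineq_definable_mip_rows convex_quadratic_mip_objective,
      of binary_vars])
  fix N Bin R A' b' Q c d and e :: "('p, 'm, 'k) mip_var \<Rightarrow> nat"
  assume e: "inj e" "\<And>v. e v < N" "Bin = e ` binary_vars" "psd N Q"
    and to_mip: "\<And>z. mip_feasible N Bin R A' b' z \<Longrightarrow>
      mip_rows (z \<circ> e) \<and> (\<forall>v\<in>binary_vars. z (e v) \<in> {0,1})"
    and from_mip: "\<And>u. mip_rows u \<Longrightarrow> \<forall>v\<in>binary_vars. u v \<in> {0,1} \<Longrightarrow>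
      \<exists>z. mip_feasible N Bin R A' b' z \<and> z \<circ> e = u"
    and obj: "\<And>z. mip_obj N Q c d z = mip_objective (z \<circ> e)"
  show thesis
  proof (rule that[OF e])
    show "mip_feas (z \<circ> e)" if "mip_feasible N Bin R A' b' z" for z
      using to_mip[OF that] unfolding mip_feas_def by simp
    show "\<exists>z. mip_feasible N Bin R A' b' z \<and> z \<circ> e = u" if "mip_feas u" for u
      using that from_mip unfolding mip_feas_def by blast
  qed (rule obj)
qed

lemma mip_reformulation:
  assumes sw: "switch_cost_bound f Ry D" and K: "2 * Ry \<le> K" "3 * D \<le> K" and D: "0 \<le> D"
  shows "exact_mip_reformulation f g F G K"
proof -
  obtain N Bin R A' b' Q c d and e :: "('p, 'm, 'k) mip_var \<Rightarrow> nat" where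
    e: "inj e" "\<And>v. e v < N" and Bin: "Bin = e ` binary_vars" and psd: "psd N Q"
    and to_mip: "\<And>z. mip_feasible N Bin R A' b' z \<Longrightarrow> mip_feas (z \<circ> e)"
    and from_mip: "\<And>u. mip_feas u \<Longrightarrow> \<exists>z. mip_feasible N Bin R A' b' z \<and> z \<circ> e = u"
    and obj: "\<And>z. mip_obj N Q c d z = mip_objective (z \<circ> e)"
    by (rule mip_encoding) blast
  define idx where "idx = e \<circ> Inl"
  have proj: "xof idx z = proj_x (z \<circ> e)" "yof idx z = proj_y (z \<circ> e)"
    "z1of idx z = proj_z1 (z \<circ> e)" "z0of idx z = proj_z0 (z \<circ> e)" for z
    unfolding idx_def xof_def yof_def z1of_def z0of_def proj_x_def proj_y_def proj_z1_def proj_z0_def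
    by simp_all
  have mip_iff: "(\<exists>z. mip_feasible N Bin R A' b' z \<and> xof idx z = x \<and> yof idx z = y \<and>
        z1of idx z = z1 \<and> z0of idx z = z0)
      \<longleftrightarrow> (\<exists>yt1 yt0 l1 l0 k1 k0. P_feas f g K x y yt1 yt0 l1 l0 k1 k0 z1 z0)" for x y z1 z0
    unfolding proj mip_feas_projections_iff[symmetric]
  proof
    assume "\<exists>z. mip_feasible N Bin R A' b' z \<and> proj_x (z \<circ> e) = x \<and> proj_y (z \<circ> e) = y \<and>
      proj_z1 (z \<circ> e) = z1 \<and> proj_z0 (z \<circ> e) = z0"
    then show "\<exists>u. mip_feas u \<and> proj_x u = x \<and> proj_y u = y \<and> proj_z1 u = z1 \<and> proj_z0 u = z0"
      using to_mip by blast
  next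
    assume "\<exists>u. mip_feas u \<and> proj_x u = x \<and> proj_y u = y \<and> proj_z1 u = z1 \<and> proj_z0 u = z0"
    then show "\<exists>z. mip_feasible N Bin R A' b' z \<and> proj_x (z \<circ> e) = x \<and> proj_y (z \<circ> e) = y \<and>
      proj_z1 (z \<circ> e) = z1 \<and> proj_z0 (z \<circ> e) = z0"
      using from_mip by blast
  qed
  show ?thesis unfolding exact_mip_reformulation_def
  proof (rule exI[of _ N], rule exI[of _ Bin], rule exI[of _ R], rule exI[of _ A'], rule exI[of _ b'],
      rule exI[of _ Q], rule exI[of _ c], rule exI[of _ d], rule exI[of _ idx], intro conjI allI impI)
    show "inj idx" unfolding idx_def using e(1) by (simp add: inj_compose)
    show "idx v < N" for v unfolding idx_def by (simp add: e(2))
    show "Bin \<subseteq> {..<N}" "idx (Inl i) \<in> Bin" for i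
      unfolding Bin idx_def binary_vars_def using e(2) by auto
    show "psd N Q" by (rule psd)
    show "mip_obj N Q c d z = F (xof idx z) (yof idx z) + G (z1of idx z, z0of idx z)"
      if "mip_feasible N Bin R A' b' z" for z
      unfolding obj proj by (rule mip_feas_objective[OF to_mip[OF that]])
    show "{(xof idx z, yof idx z, z1of idx z, z0of idx z) | z. mip_feasible N Bin R A' b' z} =
       {(x, y, z1, z0) | x y z1 z0. \<exists>yt1 yt0 l1 l0 k1 k0. P_feas f g K x y yt1 yt0 l1 l0 k1 k0 z1 z0}"
    proof (intro equalityI subsetI)
      fix t assume "t \<in> {(xof idx z, yof idx z, z1of idx z, z0of idx z) | z. mip_feasible N Bin R A' b' z}"
      then obtain z where "t = (xof idx z, yof idx z, z1of idx z, z0of idx z)" "mip_feasible N Bin R A' b' z"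
        by blast
      then show "t \<in> {(x, y, z1, z0) | x y z1 z0. \<exists>yt1 yt0 l1 l0 k1 k0. P_feas f g K x y yt1 yt0 l1 l0 k1 k0 z1 z0}"
        using mip_iff[of "xof idx z" "yof idx z" "z1of idx z" "z0of idx z"] by blast
    next
      fix t assume "t \<in> {(x, y, z1, z0) | x y z1 z0. \<exists>yt1 yt0 l1 l0 k1 k0. P_feas f g K x y yt1 yt0 l1 l0 k1 k0 z1 z0}"
      then obtain x y z1 z0 where "t = (x, y, z1, z0)"
        "\<exists>yt1 yt0 l1 l0 k1 k0. P_feas f g K x y yt1 yt0 l1 l0 k1 k0 z1 z0"
        by blast
      then show "t \<in> {(xof idx z, yof idx z, z1of idx z, z0of idx z) | z. mip_feasible N Bin R A' b' z}"
        using mip_iff[of x y z1 z0] by blast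
    qed
    show "NE f g x y \<longleftrightarrow> (\<exists>z. mip_feasible N Bin R A' b' z \<and> xof idx z = x \<and> yof idx z = y \<and>
        z1of idx z = 0 \<and> z0of idx z = 0)" for x y
      unfolding mip_iff using P_feas_zero_imp_NE[OF A1] NE_imp_P_feas[OF A1 y_bounded sw K D] by blast
    show "BQE f g (xof idx z) (yof idx z) (z1of idx z + z0of idx z)"
      if "mip_feasible N Bin R A' b' z \<and>
        (\<forall>z'. mip_feasible N Bin R A' b' z' \<longrightarrow> mip_obj N Q c d z \<le> mip_obj N Q c d z')" for z
    proof -
      have "mip_objective (z \<circ> e) \<le> mip_objective u" if "mip_feas u" for u
        using from_mip[OF that] \<open>mip_feasible N Bin R A' b' z \<and> _\<close> unfolding obj by auto
      then show ?thesis unfolding proj using optimal_imp_BQE to_mip that by blast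
    qed
    show "\<exists>z. mip_feasible N Bin R A' b' z \<and> xof idx z = x \<and> yof idx z = y"
      if "BQE f g x y \<zeta>" for x y \<zeta>
      using BQE_imp_P_feas[OF A1 y_bounded sw K that] mip_iff by blast
  qed
qed

end

theorem theorem4:
  fixes f :: "'p::finite \<Rightarrow> real \<Rightarrow> real^'m::finite \<Rightarrow> (real^'m)^'p \<Rightarrow> real"
    and g :: "'p \<Rightarrow> real \<Rightarrow> real^'m \<Rightarrow> real^'k::finite"
    and F :: "real^'p \<Rightarrow> (real^'m)^'p \<Rightarrow> real"
    and G :: "(real^'p) \<times> (real^'p) \<Rightarrow> real"
  assumes indep: "\<And>i xi yi Y Y'. (\<forall>j. j \<noteq> i \<longrightarrow> Y $ j = Y' $ j) \<Longrightarrow> f i xi yi Y = f i xi yi Y'"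
    and hA1: "A1 f g" and hA2: "A2 F G" and hA3: "A3 f g"
  shows "\<exists>K0>0. \<forall>K\<ge>K0. \<exists>N Bin R A b Q c d (idx :: 'p + ('p \<times> 'm) + 'p + 'p \<Rightarrow> nat).
     inj idx \<and> (\<forall>v. idx v < N) \<and> Bin \<subseteq> {..<N} \<and> (\<forall>i. idx (Inl i) \<in> Bin) \<and> psd N Q \<and>
     (\<forall>z. mip_feasible N Bin R A b z \<longrightarrow>
        mip_obj N Q c d z = F (xof idx z) (yof idx z) + G (z1of idx z, z0of idx z)) \<and>
     {(xof idx z, yof idx z, z1of idx z, z0of idx z) | z. mip_feasible N Bin R A b z} =
       {(x, y, z1, z0) | x y z1 z0. \<exists>yt1 yt0 l1 l0 k1 k0. P_feas f g K x y yt1 yt0 l1 l0 k1 k0 z1 z0} \<and>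
     (\<forall>x y. NE f g x y \<longleftrightarrow>
        (\<exists>z. mip_feasible N Bin R A b z \<and> xof idx z = x \<and> yof idx z = y \<and>
             z1of idx z = 0 \<and> z0of idx z = 0)) \<and>
     (\<forall>z. mip_feasible N Bin R A b z \<and>
          (\<forall>z'. mip_feasible N Bin R A b z' \<longrightarrow> mip_obj N Q c d z \<le> mip_obj N Q c d z') \<longrightarrow>
          BQE f g (xof idx z) (yof idx z) (z1of idx z + z0of idx z)) \<and>
     (\<forall>x y \<zeta>. BQE f g x y \<zeta> \<longrightarrow>
        (\<exists>z. mip_feasible N Bin R A b z \<and> xof idx z = x \<and> yof idx z = y))"
proof -
  obtain c0 M rest \<alpha> a A b where game: "affine_game f g c0 M rest \<alpha> a A b"
    using A3_imp_affine_game[OF hA3] .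
  obtain Ry where Ry: "0 \<le> Ry" "feasible_box g Ry"
    using A1_feasible_box[OF hA1] .
  obtain D where D: "0 \<le> D" "switch_cost_bound f Ry D"
    using affine_game.switch_cost_bounded[OF game Ry(1)] .
  have "exact_mip_reformulation f g F G K" if K: "max 1 (max (2 * Ry) (3 * D)) \<le> K" for K
  proof -
    from K have "0 \<le> K" "2 * Ry \<le> K" "3 * D \<le> K" by simp_all
    moreover obtain Rc Rt Rg where "game_mip f g c0 M rest \<alpha> a A b F G K Ry Rc Rt Rg"
      using affine_game.game_mip_exists[OF game hA1 hA2 \<open>0 \<le> K\<close> Ry] .
    ultimately show ?thesis using game_mip.mip_reformulation D by blast
  qed
  then show ?thesis unfolding exact_mip_reformulation_def
    by (intro exI[of _ "max 1 (max (2 * Ry) (3 * D))"]) simp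
qed

end
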